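(* Let $n\ge3$, let $G^\star=([n],E^\star)$ be a directed graph (directed cycles allowed), let $S_1=\operatorname{argmin}_{\mathcal S}|E^{(1)}|$, $S_2=\operatorname{argmin}_{S_1}|E^{(2)}|$, $S_3=\operatorname{argmin}_{S_2}|E^{(3)}|$, $S_4=\operatorname{argmin}_{S_3}|E^{(4)}|$, and define $S_5^{(1)}=S_4$ and $S_5^{(t)}=\operatorname{argmax}_{(\mathcal P,\pi)\in S_5^{(t-1)}}|D^{(t)}_{(\mathcal P,\pi)}|$ for $t\in\{2,\dots,n-2\}$. Then (i) the partially ordered partition associated with $G^\star$ belongs to $S_5^{(t)}$ for all $t\in\{1,\dots,n-2\}$, and (ii) for all $t\in\{1,\dots,n-2\}$ and $(\mathcal P,\pi)\in S_5^{(t)}$, $(a_0,a_1,\dots,a_{t+1})\in D^{(t)}_{(\mathcal P,\pi)}$ if and only if $(a_0,a_1,a_2)$ and $(a_{t-1},a_t,a_{t+1})$ are mutually exclusive with respect to the uncovered itinerary $(a_0,a_1,\dots,a_{t+1})$ in $G^\star$.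
   Context: $[n]=\{1,\dots,n\}$. The observed distribution is Markov and faithful to $G^\star$; for distinct $a,b$ and $Z\subseteq[n]\setminus\{a,b\}$, $a\perp\!\!\!\perp b\mid Z$ means $a$ and $b$ are $d$-separated given $Z$ in $G^\star$, and $a\not\perp\!\!\!\perp b\mid Z$ is its negation. In a directed graph, $a$ is an ancestor of $b$ if $a=b$ or there is a directed path from $a$ to $b$. Distinct $a,b$ are $p$-adjacent in a directed graph $G$ if there is an edge between them, or they have a common child which is an ancestor of $a$ or of $b$. For $t\ge1$, triples $(a_0,a_1,a_2)$ and $(a_{t-1},a_t,a_{t+1})$ are mutually exclusive with respect to the uncovered itinerary $(a_0,\dots,a_{t+1})$ in $G$ if: $a_i,a_{i-1}$ are $p$-adjacent for $i\in\{1,\dots,t+1\}$; $a_i,a_j$ are not $p$-adjacent for $i\in\{2,\dots,t+1\}$, $j\in\{0,\dots,i-2\}$; $a_i$ is an ancestor of $a_{i+1}$ for $i\in\{1,\dots,t-1\}$; $a_i$ is an ancestor of $a_{i-1}$ for $i\in\{2,\dots,t\}$; and $a_1$ is an ancestor of neither $a_0$ nor $a_{t+1}$. $\mathcal S$ is the set of pairs $(\mathcal P,\pi)$ with $\mathcal P$ a partition of $[n]$ and $\pi$ a partial order on $\mathcal P$; $C_1\le_\pi C_2$ iff $(C_1,C_2)\in\pi$; $C_{i,\mathcal P}$ is the block containing $i$; $C\le_\pi\max\{C_1,\dots,C_t\}$ means $C\le_\pi C_i$ for some $i$. The strongly connected components of a directed graph $G$ are the classes of $i\sim j$ iff $i=j$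 or there are directed paths $i\to j$ and $j\to i$; on them $C_1\le_G C_2$ iff $C_1=C_2$ or there is a directed path from a vertex of $C_1$ to a vertex of $C_2$. The partially ordered partition associated with $G$ is (its set of strongly connected components, $\le_G$). For $(\mathcal P,\pi)\in\mathcal S$ (all sets indexed by $(\mathcal P,\pi)$): $E^{(1)}=\{(a,b): a\ne b,\ a\not\perp\!\!\!\perp b\mid\bigcup\{C\in\mathcal P: C\le_\pi\max\{C_{a,\mathcal P},C_{b,\mathcal P}\}\}\setminus\{a,b\}\}$; $E^{(2)}$: $(a,b,c)$ distinct, $(a,b),(c,b)\in E^{(1)}$, $(a,c)\notin E^{(1)}$, $C_{b,\mathcal P}\le_\pi\max\{C_{a,\mathcal P},C_{c,\mathcal P}\}$; $E^{(3)}$: $(a,b,c)$ distinct, $(a,b),(c,b)\in E^{(1)}$, $(a,c)\notin E^{(1)}$, $a\not\perp\!\!\!\perp c\mid\bigcup\{C\in\mathcal P: C\le_\pi\max\{C_{a,\mathcal P},C_{b,\mathcal P},C_{c,\mathcal P}\}\}\setminus\{a,c\}$; $E^{(4)}$: pairs $((a,b_1,c),(a,b_2,c))$ with $a,b_1,c$ distinct, $a,b_2,c$ distinct, $(a,b_1),(c,b_1),(a,b_2),(c,b_2)\in E^{(1)}$, $(a,c)\notin E^{(1)}$, $(a,b_1,c),(a,b_2,c)\notin E^{(2)}\cup E^{(3)}$, $C_{b_1,\mathcal P}\le_\pi C_{b_2,\mathcal P}$. For $t\in\{1,\dots,n-2\}$, $D^{(t)}$ is the set of $(a_0,\dots,a_{t+1})\in[n]^{t+2}$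 of distinct elements with $(a_i,a_{i+1})\in E^{(1)}$ for $i\in\{0,\dots,t\}$, $(a_i,a_j)\notin E^{(1)}$ for $i\in\{2,\dots,t+1\}$, $j\in\{0,\dots,i-2\}$, $C_{a_1,\mathcal P}=\dots=C_{a_t,\mathcal P}$, and not $C_{a_1,\mathcal P}\le_\pi\max\{C_{a_0,\mathcal P},C_{a_{t+1},\mathcal P}\}$. *)

theory Defs
  imports Main "HOL-Library.Disjoint_Sets"
begin

type_synonym pop = "nat set set \<times> (nat set \<times> nat set) set"

definition anc :: "(nat \<times> nat) set \<Rightarrow> nat \<Rightarrow> nat \<Rightarrow> bool" where
  "anc E a b \<longleftrightarrow> (a, b) \<in> E\<^sup>*"

text \<open>Colliders must be ancestors of Z, non-colliders must lie outside Z.\<close>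
definition dconn_path :: "(nat \<times> nat) set \<Rightarrow> nat set \<Rightarrow> nat list \<Rightarrow> bool list \<Rightarrow> bool" where
  "dconn_path E Z vs ds \<longleftrightarrow>
     length vs \<ge> 2 \<and> distinct vs \<and> length ds = length vs - 1 \<and>
     (\<forall>i < length ds. (if ds ! i then (vs ! i, vs ! Suc i) \<in> E else (vs ! Suc i, vs ! i) \<in> E)) \<and>
     (\<forall>i. 0 < i \<and> i < length ds \<longrightarrow>
        (if ds ! (i - 1) \<and> \<not> ds ! i
         then (\<exists>z\<in>Z. anc E (vs ! i) z)
         else vs ! i \<notin> Z))"

definition dsep :: "(nat \<times> nat) set \<Rightarrow> nat \<Rightarrow> nat \<Rightarrow> nat set \<Rightarrow> bool" where
  "dsep E a b Z \<longleftrightarrow>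
     \<not> (\<exists>vs ds. dconn_path E Z vs ds \<and> hd vs = a \<and> last vs = b)"

definition POPs :: "nat \<Rightarrow> pop set" where
  "POPs n = {(P, pi). partition_on {1..n} P \<and> partial_order_on P pi}"

definition blk :: "nat set set \<Rightarrow> nat \<Rightarrow> nat set" where
  "blk P i = (THE C. C \<in> P \<and> i \<in> C)"

definition below :: "pop \<Rightarrow> nat set set \<Rightarrow> nat set" where
  "below x Cs = \<Union>{C \<in> fst x. \<exists>C'\<in>Cs. (C, C') \<in> snd x}"

definition E1 :: "nat \<Rightarrow> (nat \<times> nat) set \<Rightarrow> pop \<Rightarrow> (nat \<times> nat) set" where
  "E1 n E x = {(a, b). a \<in> {1..n} \<and> b \<in> {1..n} \<and> a \<noteq> b \<and>
     \<not> dsep E a b (below x {blk (fst x) a, blk (fst x) b} - {a, b})}"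

definition E2 :: "nat \<Rightarrow> (nat \<times> nat) set \<Rightarrow> pop \<Rightarrow> (nat \<times> nat \<times> nat) set" where
  "E2 n E x = {(a, b, c). a \<noteq> b \<and> a \<noteq> c \<and> b \<noteq> c \<and>
     (a, b) \<in> E1 n E x \<and> (c, b) \<in> E1 n E x \<and> (a, c) \<notin> E1 n E x \<and>
     ((blk (fst x) b, blk (fst x) a) \<in> snd x \<or> (blk (fst x) b, blk (fst x) c) \<in> snd x)}"

definition E3 :: "nat \<Rightarrow> (nat \<times> nat) set \<Rightarrow> pop \<Rightarrow> (nat \<times> nat \<times> nat) set" where
  "E3 n E x = {(a, b, c). a \<noteq> b \<and> a \<noteq> c \<and> b \<noteq> c \<and>
     (a, b) \<in> E1 n E x \<and> (c, b) \<in> E1 n E x \<and> (a, c) \<notin> E1 n E x \<and>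
     \<not> dsep E a c (below x {blk (fst x) a, blk (fst x) b, blk (fst x) c} - {a, c})}"

definition E4 :: "nat \<Rightarrow> (nat \<times> nat) set \<Rightarrow> pop \<Rightarrow>
    ((nat \<times> nat \<times> nat) \<times> (nat \<times> nat \<times> nat)) set" where
  "E4 n E x = {((a, b1, c), (a', b2, c')). a' = a \<and> c' = c \<and>
     a \<noteq> b1 \<and> a \<noteq> c \<and> b1 \<noteq> c \<and> a \<noteq> b2 \<and> b2 \<noteq> c \<and>
     (a, b1) \<in> E1 n E x \<and> (c, b1) \<in> E1 n E x \<and>
     (a, b2) \<in> E1 n E x \<and> (c, b2) \<in> E1 n E x \<and> (a, c) \<notin> E1 n E x \<and>
     (a, b1, c) \<notin> E2 n E x \<union> E3 n E x \<and> (a, b2, c) \<notin> E2 n E x \<union> E3 n E x \<and>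
     (blk (fst x) b1, blk (fst x) b2) \<in> snd x}"

definition Dt :: "nat \<Rightarrow> (nat \<times> nat) set \<Rightarrow> nat \<Rightarrow> pop \<Rightarrow> nat list set" where
  "Dt n E t x = {as. length as = t + 2 \<and> set as \<subseteq> {1..n} \<and> distinct as \<and>
     (\<forall>i \<le> t. (as ! i, as ! (i + 1)) \<in> E1 n E x) \<and>
     (\<forall>i \<in> {2..t+1}. \<forall>j. j + 2 \<le> i \<longrightarrow> (as ! i, as ! j) \<notin> E1 n E x) \<and>
     (\<forall>i \<in> {1..t}. blk (fst x) (as ! i) = blk (fst x) (as ! 1)) \<and>
     \<not> ((blk (fst x) (as ! 1), blk (fst x) (as ! 0)) \<in> snd x \<or>
        (blk (fst x) (as ! 1), blk (fst x) (as ! (t + 1))) \<in> snd x)}"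

definition argmin_on :: "'a set \<Rightarrow> ('a \<Rightarrow> nat) \<Rightarrow> 'a set" where
  "argmin_on X f = {x \<in> X. \<forall>y \<in> X. f x \<le> f y}"

definition argmax_on :: "'a set \<Rightarrow> ('a \<Rightarrow> nat) \<Rightarrow> 'a set" where
  "argmax_on X f = {x \<in> X. \<forall>y \<in> X. f y \<le> f x}"

definition S1 :: "nat \<Rightarrow> (nat \<times> nat) set \<Rightarrow> pop set" where
  "S1 n E = argmin_on (POPs n) (\<lambda>x. card (E1 n E x))"
definition S2 :: "nat \<Rightarrow> (nat \<times> nat) set \<Rightarrow> pop set" where
  "S2 n E = argmin_on (S1 n E) (\<lambda>x. card (E2 n E x))"
definition S3 :: "nat \<Rightarrow> (nat \<times> nat) set \<Rightarrow> pop set" where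
  "S3 n E = argmin_on (S2 n E) (\<lambda>x. card (E3 n E x))"
definition S4 :: "nat \<Rightarrow> (nat \<times> nat) set \<Rightarrow> pop set" where
  "S4 n E = argmin_on (S3 n E) (\<lambda>x. card (E4 n E x))"

text \<open>S5 n E t for t >= 1 (the value at t = 0 is an unused dummy).\<close>
fun S5 :: "nat \<Rightarrow> (nat \<times> nat) set \<Rightarrow> nat \<Rightarrow> pop set" where
  "S5 n E 0 = S4 n E"
| "S5 n E (Suc 0) = S4 n E"
| "S5 n E (Suc (Suc k)) =
     argmax_on (S5 n E (Suc k)) (\<lambda>x. card (Dt n E (Suc (Suc k)) x))"

definition scc :: "nat \<Rightarrow> (nat \<times> nat) set \<Rightarrow> nat \<Rightarrow> nat set" where
  "scc n E i = {j \<in> {1..n}. (i, j) \<in> E\<^sup>* \<and> (j, i) \<in> E\<^sup>*}"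

definition pop_of :: "nat \<Rightarrow> (nat \<times> nat) set \<Rightarrow> pop" where
  "pop_of n E = (let P = scc n E ` {1..n} in
     (P, {(C1, C2). C1 \<in> P \<and> C2 \<in> P \<and>
          (C1 = C2 \<or> (\<exists>u \<in> C1. \<exists>v \<in> C2. (u, v) \<in> E\<^sup>*))}))"

definition padj :: "(nat \<times> nat) set \<Rightarrow> nat \<Rightarrow> nat \<Rightarrow> bool" where
  "padj E a b \<longleftrightarrow> a \<noteq> b \<and>
     ((a, b) \<in> E \<or> (b, a) \<in> E \<or>
      (\<exists>c. (a, c) \<in> E \<and> (b, c) \<in> E \<and> (anc E c a \<or> anc E c b)))"

definition mutex :: "(nat \<times> nat) set \<Rightarrow> nat \<Rightarrow> nat list \<Rightarrow> bool" where
  "mutex E t as \<longleftrightarrow> t \<ge> 1 \<and> length as = t + 2 \<and> distinct as \<and>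
     (\<forall>i \<in> {1..t+1}. padj E (as ! i) (as ! (i - 1))) \<and>
     (\<forall>i \<in> {2..t+1}. \<forall>j. j + 2 \<le> i \<longrightarrow> \<not> padj E (as ! i) (as ! j)) \<and>
     (\<forall>i \<in> {1..t-1}. anc E (as ! i) (as ! (i + 1))) \<and>
     (\<forall>i \<in> {2..t}. anc E (as ! i) (as ! (i - 1))) \<and>
     \<not> anc E (as ! 1) (as ! 0) \<and> \<not> anc E (as ! 1) (as ! (t + 1))"

end

theory Submission
  imports Defs
begin

text \<open>
  At the partially ordered partition of G* into strongly connected components, the union of
  the blocks below those of a and b is the ancestral set An{a, b}. Given An(S) minus the two
  ends, every inner vertex of a d-connecting path must be a collider, so only edges and
  common children in An(S) survive; hence E1 is the p-adjacency relation there, while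
  p-adjacent vertices are d-connected given any set. Similar d-connection arguments show that
  E2, E3 and E4 of the true partition are contained in those of every partition surviving the
  previous stages, so each argmin keeps exactly the partitions agreeing with it.

  At the true partition D(t) consists of the mutually exclusive itineraries. For a surviving
  competitor, an element of D(t) has d-separated ends, so some inner vertex is not an ancestor
  of the ends or the conditioning set; choosing one whose strongly connected component is
  maximal, the run of that component around it is a mutually exclusive sub-itinerary. A proper
  one would lie in D(s) for some s < t, contradicting the block condition of D(s); so the whole
  itinerary is mutually exclusive, and the argmax again keeps exactly the agreeing partitions.
\<close>

section \<open>Ancestors and d-connecting walks\<close>

definition An :: "(nat \<times> nat) set \<Rightarrow> nat set \<Rightarrow> nat set" where
  "An E S = {v. \<exists>s\<in>S. anc E v s}"

lemma anc_refl [simp]: "anc E a a"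
  unfolding anc_def by simp

lemma anc_trans: "anc E a b \<Longrightarrow> anc E b c \<Longrightarrow> anc E a c"
  unfolding anc_def by (rule rtrancl_trans)

lemma anc_edge: "(a, b) \<in> E \<Longrightarrow> anc E a b"
  unfolding anc_def by simp

lemma in_An: "v \<in> S \<Longrightarrow> v \<in> An E S"
  unfolding An_def using anc_refl by blast

lemma An_anc_trans: "anc E u v \<Longrightarrow> v \<in> An E S \<Longrightarrow> u \<in> An E S"
  unfolding An_def using anc_trans by blast

lemma An_subset_An: "T \<subseteq> An E S \<Longrightarrow> An E T \<subseteq> An E S"
  unfolding An_def using anc_trans by blast

lemma An_Un_iff: "v \<in> An E (S \<union> T) \<longleftrightarrow> v \<in> An E S \<or> v \<in> An E T"
  unfolding An_def by blast

definition dconn_walk :: "(nat \<times> nat) set \<Rightarrow> nat set \<Rightarrow> nat list \<Rightarrow> bool list \<Rightarrow> bool" where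
  "dconn_walk E Z vs ds \<longleftrightarrow>
     length vs \<ge> 2 \<and> length ds = length vs - 1 \<and>
     (\<forall>i < length ds. (if ds ! i then (vs ! i, vs ! Suc i) \<in> E else (vs ! Suc i, vs ! i) \<in> E)) \<and>
     (\<forall>i. 0 < i \<and> i < length ds \<longrightarrow>
        (if ds ! (i - 1) \<and> \<not> ds ! i then vs ! i \<in> An E Z else vs ! i \<notin> Z))"

lemma dconn_path_iff: "dconn_path E Z vs ds \<longleftrightarrow> dconn_walk E Z vs ds \<and> distinct vs"
  unfolding dconn_path_def dconn_walk_def An_def by auto

lemma dconn_walk_edge:
  "dconn_walk E Z vs ds \<Longrightarrow> i < length ds \<Longrightarrow>
   (if ds ! i then (vs ! i, vs ! Suc i) \<in> E else (vs ! Suc i, vs ! i) \<in> E)"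
  unfolding dconn_walk_def by blast

lemma dconn_walk_inner:
  "dconn_walk E Z vs ds \<Longrightarrow> 0 < i \<Longrightarrow> i < length ds \<Longrightarrow>
   (if ds ! (i - 1) \<and> \<not> ds ! i then vs ! i \<in> An E Z else vs ! i \<notin> Z)"
  unfolding dconn_walk_def by blast

lemma dconn_walk_length: "dconn_walk E Z vs ds \<Longrightarrow> length vs \<ge> 2 \<and> length ds = length vs - 1"
  unfolding dconn_walk_def by blast

lemma dconn_walk_forward:
  assumes w: "dconn_walk E Z vs ds" and i: "0 < i" "ds ! (i - 1)" and nZ: "vs ! i \<notin> An E Z"
  shows "i \<le> l \<Longrightarrow> l < length ds \<Longrightarrow> ds ! l \<and> (vs ! i, vs ! Suc l) \<in> E\<^sup>*"
proof (induction l rule: dec_induct)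
  case base
  then have "ds ! i" using dconn_walk_inner[OF w i(1)] i(2) nZ by (metis (full_types))
  then show ?case using dconn_walk_edge[OF w, of i] base by auto
next
  case (step m)
  then have IH: "ds ! m" "(vs ! i, vs ! Suc m) \<in> E\<^sup>*" by auto
  have "vs ! Suc m \<notin> An E Z"
    using nZ IH(2) An_anc_trans unfolding anc_def by blast
  then have "ds ! Suc m" using dconn_walk_inner[OF w, of "Suc m"] step IH(1) by (metis (full_types) diff_Suc_1 zero_less_Suc)
  moreover have "(vs ! Suc m, vs ! Suc (Suc m)) \<in> E" using dconn_walk_edge[OF w, of "Suc m"] step \<open>ds ! Suc m\<close> by simp
  ultimately show ?case using IH(2) by (meson rtrancl.rtrancl_into_rtrancl)
qed

lemma nth_take_append_drop:
  assumes "k + m \<le> length xs" "l + m < length xs"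
  shows "(take k xs @ drop (k + m) xs) ! l = xs ! (if l < k then l else l + m)"
  using assms by (auto simp: nth_append add.commute add.left_commute)

text \<open>If cutting out the loop between two visits of a vertex turns it into a collider, the
  vertex is an ancestor of Z: otherwise the walk, having entered it forwards, would have gone on
  forwards up to the second visit.\<close>
lemma dconn_walk_junction:
  assumes w: "dconn_walk E Z vs ds" and ij: "0 < i" "i < j" "j < length ds" "vs ! i = vs ! j"
  shows "if ds ! (i - 1) \<and> \<not> ds ! j then vs ! i \<in> An E Z else vs ! i \<notin> Z"
proof (cases "ds ! (i - 1) \<and> \<not> ds ! j")
  case True
  then have "vs ! i \<in> An E Z" using dconn_walk_forward[OF w ij(1) _ _ _ ij(3)] ij(2) by auto
  then show ?thesis unfolding if_P[OF True] .
next
  case False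
  have "if ds ! (i - 1) \<and> \<not> ds ! i then vs ! i \<in> An E Z else vs ! i \<notin> Z"
    by (rule dconn_walk_inner[OF w]) (use ij in auto)
  moreover have "if ds ! (j - 1) \<and> \<not> ds ! j then vs ! j \<in> An E Z else vs ! j \<notin> Z"
    by (rule dconn_walk_inner[OF w]) (use ij in auto)
  ultimately have "vs ! i \<notin> Z" using False ij by (auto split: if_splits)
  then show ?thesis unfolding if_not_P[OF False] .
qed

lemma dconn_walk_shortcut:
  assumes w: "dconn_walk E Z vs ds" and ij: "i < j" "j < length vs" "vs ! i = vs ! j"
    and proper: "0 < i \<or> j < length vs - 1"
  shows "dconn_walk E Z (take (Suc i) vs @ drop (Suc j) vs) (take i ds @ drop j ds)"
proof -
  define m where "m = j - i"
  define \<sigma> where "\<sigma> l = (if l < i then l else l + m)" for l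
  let ?vs = "take (Suc i) vs @ drop (Suc j) vs" and ?ds = "take i ds @ drop j ds"
  have len: "length vs \<ge> 2" "length ds = length vs - 1" using dconn_walk_length[OF w] by auto
  have len': "length ?vs = length vs - m" "length ?ds = length ds - m"
    using ij len unfolding m_def by auto
  have vs': "?vs ! l = vs ! \<sigma> l" if "l < length ?vs" for l
    using nth_take_append_drop[of "Suc i" m vs l] that ij len' unfolding m_def \<sigma>_def
    by (cases "l = i") auto
  have vs'_Suc: "?vs ! Suc l = vs ! Suc (\<sigma> l)" if "l < length ?ds" for l
    using nth_take_append_drop[of "Suc i" m vs "Suc l"] that ij len len' unfolding m_def \<sigma>_def
    by auto
  have ds': "?ds ! l = ds ! \<sigma> l" if "l < length ?ds" for l
    using nth_take_append_drop[of i m ds l] that ij len len' unfolding m_def \<sigma>_def by auto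
  have \<sigma>_lt: "\<sigma> l < length ds" if "l < length ?ds" for l
    using that len' unfolding \<sigma>_def by auto
  show ?thesis
    unfolding dconn_walk_def
  proof (intro conjI allI impI)
    show "2 \<le> length ?vs" using len' len ij proper unfolding m_def by auto
    show "length ?ds = length ?vs - 1" using len' len by simp
  next
    fix l assume l: "l < length ?ds"
    then have "l < length ?vs" using len' len by arith
    then show "if ?ds ! l then (?vs ! l, ?vs ! Suc l) \<in> E else (?vs ! Suc l, ?vs ! l) \<in> E"
      using dconn_walk_edge[OF w \<sigma>_lt[OF l]] vs' vs'_Suc[OF l] ds'[OF l] by simp
  next
    fix l assume l: "0 < l \<and> l < length ?ds"
    have l_vs: "l < length ?vs" using l len' len by arith
    show "if ?ds ! (l - 1) \<and> \<not> ?ds ! l then ?vs ! l \<in> An E Z else ?vs ! l \<notin> Z"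
    proof (cases "l = i")
      case False
      then have "\<sigma> (l - 1) = \<sigma> l - 1" "0 < \<sigma> l" using l unfolding \<sigma>_def by auto
      then show ?thesis
        using dconn_walk_inner[OF w _ \<sigma>_lt] l vs'[OF l_vs] ds'[of l] ds'[of "l - 1"] by auto
    next
      case True
      have j_ds: "j < length ds" using l True len' unfolding m_def by auto
      have "i + m = j" using ij unfolding m_def by simp
      then have "?ds ! (i - 1) = ds ! (i - 1)" "?ds ! i = ds ! j" "?vs ! i = vs ! i"
        using ds'[of "i - 1"] ds'[of i] vs'[of i] l l_vs True ij unfolding \<sigma>_def by auto
      then show ?thesis using dconn_walk_junction[OF w _ ij(1) j_ds ij(3)] l True by simp
    qed
  qed
qed

lemma dconn_walk_imp_path:
  assumes "dconn_walk E Z vs ds" "hd vs \<noteq> last vs"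
  shows "\<exists>vs' ds'. dconn_path E Z vs' ds' \<and> hd vs' = hd vs \<and> last vs' = last vs"
  using assms
proof (induction "length vs" arbitrary: vs ds rule: less_induct)
  case less
  show ?case
  proof (cases "distinct vs")
    case True
    then show ?thesis using less.prems by (auto simp: dconn_path_iff)
  next
    case False
    then obtain i j where ij: "i < j" "j < length vs" "vs ! i = vs ! j"
      unfolding distinct_conv_nth by (metis linorder_neqE_nat)
    have ne: "vs \<noteq> []" using ij by auto
    have proper: "0 < i \<or> j < length vs - 1"
    proof (rule ccontr)
      assume "\<not> ?thesis"
      then have "i = 0" "j = length vs - 1" using ij by auto
      then show False using less.prems(2) ij ne by (simp add: hd_conv_nth last_conv_nth)
    qed
    let ?vs = "take (Suc i) vs @ drop (Suc j) vs"
    have hd: "hd ?vs = hd vs" using ne by simp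
    have last: "last ?vs = last vs"
    proof (cases "j = length vs - 1")
      case True
      then show ?thesis using ij ne by (simp add: last_conv_nth min_def)
    next
      case False
      then show ?thesis using ij by (simp add: last_drop)
    qed
    show ?thesis
      using less.hyps[OF _ dconn_walk_shortcut[OF less.prems(1) ij proper]] ij less.prems(2)
      unfolding hd last by auto
  qed
qed

lemma dconn_walk_single:
  "(if d then (a, v) \<in> E else (v, a) \<in> E) \<Longrightarrow> dconn_walk E Z [a, v] [d]"
  unfolding dconn_walk_def by auto

lemma dconn_walk_extend:
  assumes w: "dconn_walk E Z vs ds" and ends: "hd vs = a" "last vs = u" "last ds = d"
    and e: "if d' then (u, v) \<in> E else (v, u) \<in> E"
    and c: "if d \<and> \<not> d' then u \<in> An E Z else u \<notin> Z"
  shows "\<exists>vs' ds'. dconn_walk E Z vs' ds' \<and> hd vs' = a \<and> last vs' = v \<and> last ds' = d'"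
proof (intro exI conjI)
  have len: "length vs \<ge> 2" "length ds = length vs - 1" using dconn_walk_length[OF w] by auto
  then have ne: "vs \<noteq> []" "ds \<noteq> []" by auto
  then have u: "vs ! length ds = u" and d: "ds ! (length ds - 1) = d"
    using ends(2,3) len by (metis last_conv_nth)+
  show "dconn_walk E Z (vs @ [v]) (ds @ [d'])"
    unfolding dconn_walk_def
  proof (intro conjI allI impI)
    show "2 \<le> length (vs @ [v])" "length (ds @ [d']) = length (vs @ [v]) - 1" using len by auto
  next
    fix i assume "i < length (ds @ [d'])"
    then consider "i < length ds" | "i = length ds" by fastforce
    then show "if (ds @ [d']) ! i then ((vs @ [v]) ! i, (vs @ [v]) ! Suc i) \<in> E
               else ((vs @ [v]) ! Suc i, (vs @ [v]) ! i) \<in> E"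
    proof cases
      case 1
      then have "Suc i < length vs" using len by simp
      then show ?thesis using 1 dconn_walk_edge[OF w 1] by (simp add: nth_append)
    next
      case 2
      then have "i < length vs" "Suc i = length vs" using len by auto
      then show ?thesis using 2 e u by (simp add: nth_append)
    qed
  next
    fix i assume i: "0 < i \<and> i < length (ds @ [d'])"
    then consider "i < length ds" | "i = length ds" by fastforce
    then show "if (ds @ [d']) ! (i - 1) \<and> \<not> (ds @ [d']) ! i then (vs @ [v]) ! i \<in> An E Z
               else (vs @ [v]) ! i \<notin> Z"
    proof cases
      case 1
      then have "i < length vs" "i - 1 < length ds" using len by auto
      then show ?thesis using 1 dconn_walk_inner[OF w _ 1] i by (simp add: nth_append)
    next
      case 2
      then have "i < length vs" "i - 1 < length ds" using len i by auto
      then show ?thesis using 2 c u d by (simp add: nth_append)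
    qed
  qed
  show "hd (vs @ [v]) = a" "last (vs @ [v]) = v" "last (ds @ [d']) = d'"
    using ends ne by auto
qed

text \<open>dreach E Z a v d: some d-connecting walk given Z leads from a to v, and its
  last edge points into v iff d.\<close>
inductive dreach :: "(nat \<times> nat) set \<Rightarrow> nat set \<Rightarrow> nat \<Rightarrow> nat \<Rightarrow> bool \<Rightarrow> bool"
  for E Z a where
  out_edge: "(a, v) \<in> E \<Longrightarrow> dreach E Z a v True"
| in_edge: "(v, a) \<in> E \<Longrightarrow> dreach E Z a v False"
| extend_out: "dreach E Z a u d \<Longrightarrow> u \<notin> Z \<Longrightarrow> (u, v) \<in> E \<Longrightarrow> dreach E Z a v True"
| extend_in: "dreach E Z a u False \<Longrightarrow> u \<notin> Z \<Longrightarrow> (v, u) \<in> E \<Longrightarrow> dreach E Z a v False"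
| extend_collider:
    "dreach E Z a u True \<Longrightarrow> u \<in> An E Z \<Longrightarrow> (v, u) \<in> E \<Longrightarrow> dreach E Z a v False"

lemma dreach_imp_dconn_walk:
  "dreach E Z a v d \<Longrightarrow> \<exists>vs ds. dconn_walk E Z vs ds \<and> hd vs = a \<and> last vs = v \<and> last ds = d"
proof (induction rule: dreach.induct)
  case (out_edge v)
  then show ?case using dconn_walk_single[of True a v E Z] by fastforce
next
  case (in_edge v)
  then show ?case using dconn_walk_single[of False a v E Z] by fastforce
next
  case (extend_out u d v)
  then show ?case using dconn_walk_extend[of E Z _ _ a u d True v] by auto
next
  case (extend_in u v)
  then show ?case using dconn_walk_extend[of E Z _ _ a u False False v] by auto
next
  case (extend_collider u v)
  then show ?case using dconn_walk_extend[of E Z _ _ a u True False v] by auto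
qed

lemma dreach_not_dsep: "dreach E Z a b d \<Longrightarrow> a \<noteq> b \<Longrightarrow> \<not> dsep E a b Z"
  unfolding dsep_def using dreach_imp_dconn_walk dconn_walk_imp_path by metis

lemma dreach_from_ancestor:
  assumes "(w, a) \<in> E\<^sup>*"
  shows "w \<notin> An E Z \<Longrightarrow> w = a \<or> dreach E Z a w False"
  using assms
proof (induction rule: converse_rtrancl_induct)
  case (step y z)
  have "z \<notin> An E Z" using step.prems An_anc_trans[OF anc_edge[OF step.hyps(1)]] by blast
  then have "z = a \<or> dreach E Z a z False" by (rule step.IH)
  then show ?case
  proof
    assume "z = a"
    then show ?thesis using dreach.in_edge step.hyps(1) by simp
  next
    assume "dreach E Z a z False"
    moreover have "z \<notin> Z" using \<open>z \<notin> An E Z\<close> in_An by metis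
    ultimately show ?thesis using dreach.extend_in step.hyps(1) by simp
  qed
qed simp

lemma dreach_to_descendant:
  assumes "(u, w) \<in> E\<^sup>*" and u: "u = a \<or> (\<exists>d. dreach E Z a u d)" "u \<notin> An E Z"
  shows "w = u \<or> dreach E Z a w True"
  using assms(1)
proof (induction rule: rtrancl_induct)
  case (step y z)
  have "y \<notin> An E Z" using u(2) step.hyps(1) An_anc_trans unfolding anc_def by blast
  then have "y \<notin> Z" using in_An by metis
  from step.IH show ?case
  proof
    assume "y = u"
    from u(1) show ?thesis
    proof
      assume "u = a"
      then show ?thesis using dreach.out_edge step.hyps(2) \<open>y = u\<close> by simp
    next
      assume "\<exists>d. dreach E Z a u d"
      then show ?thesis using dreach.extend_out step.hyps(2) \<open>y = u\<close> \<open>y \<notin> Z\<close> by blast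
    qed
  next
    assume "dreach E Z a y True"
    then show ?thesis using dreach.extend_out step.hyps(2) \<open>y \<notin> Z\<close> by simp
  qed
qed simp

text \<open>From an open vertex outside Z a d-connecting walk can continue along any edge.\<close>
definition dreach_open :: "(nat \<times> nat) set \<Rightarrow> nat set \<Rightarrow> nat \<Rightarrow> nat \<Rightarrow> bool" where
  "dreach_open E Z a u \<longleftrightarrow>
     u = a \<or> dreach E Z a u False \<or> (dreach E Z a u True \<and> u \<in> An E Z)"

lemma dreach_open_or_reaches:
  assumes r: "dreach E Z a u d" and u: "u \<in> An E (Z \<union> {a, b})"
  shows "dreach_open E Z a u \<or> (\<exists>d. dreach E Z a b d)"
proof (cases "d \<and> u \<notin> An E Z")
  case True
  then consider "anc E u a" | "anc E u b" using u unfolding An_def by auto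
  then show ?thesis
  proof cases
    case 1
    then have "u = a \<or> dreach E Z a u False"
      using dreach_from_ancestor True unfolding anc_def by blast
    then show ?thesis unfolding dreach_open_def by blast
  next
    case 2
    then have "b = u \<or> dreach E Z a b True"
      using dreach_to_descendant[of u b E a Z] True r unfolding anc_def by blast
    then show ?thesis using r True by blast
  qed
next
  case False
  then show ?thesis using r unfolding dreach_open_def by (cases d) auto
qed

lemma dreach_open_step:
  assumes u: "dreach_open E Z a u" "u = a \<or> u \<notin> Z"
  shows dreach_open_out: "(u, w) \<in> E \<Longrightarrow> dreach E Z a w True"
    and dreach_open_in: "(w, u) \<in> E \<Longrightarrow> dreach E Z a w False"
proof -
  assume uw: "(u, w) \<in> E"
  show "dreach E Z a w True"
  proof (cases "u = a")
    case True
    then show ?thesis using dreach.out_edge uw by simp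
  next
    case False
    then have "u \<notin> Z" "\<exists>d. dreach E Z a u d" using u unfolding dreach_open_def by auto
    then show ?thesis using dreach.extend_out uw by blast
  qed
next
  assume wu: "(w, u) \<in> E"
  show "dreach E Z a w False"
  proof (cases "u = a")
    case True
    then show ?thesis using dreach.in_edge wu by simp
  next
    case False
    then have "u \<notin> Z" and "dreach E Z a u False \<or> (dreach E Z a u True \<and> u \<in> An E Z)"
      using u unfolding dreach_open_def by auto
    then show ?thesis using dreach.extend_in dreach.extend_collider wu by blast
  qed
qed

lemma dreach_padj_step:
  assumes u: "dreach_open E Z a u" "u = a \<or> u \<notin> Z" and uv: "padj E u v"
    and An_uv: "u \<in> An E (Z \<union> {a, b})" "v \<in> An E (Z \<union> {a, b})"
  shows "(\<exists>d. dreach E Z a v d) \<or> (\<exists>d. dreach E Z a b d)"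
proof -
  from uv consider "(u, v) \<in> E" | "(v, u) \<in> E"
    | c where "(u, c) \<in> E" "(v, c) \<in> E" "anc E c u \<or> anc E c v"
    unfolding padj_def by blast
  then show ?thesis
  proof cases
    case 1
    then show ?thesis using dreach_open_out[OF u] by blast
  next
    case 2
    then show ?thesis using dreach_open_in[OF u] by blast
  next
    case 3
    have c: "dreach E Z a c True" using dreach_open_out[OF u 3(1)] .
    show ?thesis
    proof (cases "c \<in> An E Z")
      case True
      then show ?thesis using dreach.extend_collider[OF c True 3(2)] by blast
    next
      case False
      have "c \<in> An E (Z \<union> {a, b})" using 3(3) An_uv An_anc_trans by blast
      then have "dreach_open E Z a c \<or> (\<exists>d. dreach E Z a b d)"
        using dreach_open_or_reaches[OF c] by blast
      moreover have "c = a \<or> c \<notin> Z" using False in_An by metis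
      ultimately show ?thesis using dreach_open_in 3(2) by blast
    qed
  qed
qed

lemma padj_chain_not_dsep:
  assumes len: "length cs \<ge> 2" and ends: "hd cs \<noteq> last cs"
    and chain: "\<And>i. Suc i < length cs \<Longrightarrow> padj E (cs ! i) (cs ! Suc i)"
    and inner: "\<And>i. 0 < i \<Longrightarrow> Suc i < length cs \<Longrightarrow> cs ! i \<notin> Z"
    and An_cs: "\<And>i. i < length cs \<Longrightarrow> cs ! i \<in> An E (Z \<union> {hd cs, last cs})"
  shows "\<not> dsep E (hd cs) (last cs) Z"
proof -
  define a where "a = hd cs"
  define b where "b = last cs"
  have "cs \<noteq> []" using len by auto
  then have cs0: "cs ! 0 = a" and cs_last: "cs ! (length cs - 1) = b"
    unfolding a_def b_def by (simp_all add: hd_conv_nth last_conv_nth)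
  have reach: "(\<exists>d. dreach E Z a (cs ! i) d) \<or> (\<exists>d. dreach E Z a b d)"
    if "0 < i" "i < length cs" for i
    using that
  proof (induction i)
    case (Suc i)
    have An_i: "cs ! i \<in> An E (Z \<union> {a, b})" "cs ! Suc i \<in> An E (Z \<union> {a, b})"
      using An_cs Suc.prems unfolding a_def b_def by auto
    have "dreach_open E Z a (cs ! i) \<or> (\<exists>d. dreach E Z a b d)"
    proof (cases "i = 0")
      case True
      then show ?thesis using cs0 unfolding dreach_open_def by simp
    next
      case False
      then have "(\<exists>d. dreach E Z a (cs ! i) d) \<or> (\<exists>d. dreach E Z a b d)"
        using Suc.IH Suc.prems by simp
      then show ?thesis using dreach_open_or_reaches An_i(1) by blast
    qed
    moreover have "cs ! i = a \<or> cs ! i \<notin> Z" using inner[of i] cs0 Suc.prems by (cases i) auto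
    ultimately show ?case using dreach_padj_step chain Suc.prems An_i by blast
  qed simp
  have "\<exists>d. dreach E Z a b d" using reach[of "length cs - 1"] len cs_last by auto
  then show ?thesis using dreach_not_dsep ends unfolding a_def b_def by blast
qed

lemma padj_not_dsep:
  assumes "padj E a b"
  shows "\<not> dsep E a b Z"
proof -
  have "\<not> dsep E (hd [a, b]) (last [a, b]) Z"
  proof (rule padj_chain_not_dsep)
    fix i assume "i < length [a, b]"
    then have "i = 0 \<or> i = 1" by auto
    then show "[a, b] ! i \<in> An E (Z \<union> {hd [a, b], last [a, b]})" using in_An by auto
  qed (use assms padj_def in auto)
  then show ?thesis by simp
qed

lemma padj_padj_not_dsep:
  assumes "padj E a b" "padj E b c" "a \<noteq> c" "b \<notin> Z" "b \<in> An E (Z \<union> {a, c})"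
  shows "\<not> dsep E a c Z"
proof -
  have "\<not> dsep E (hd [a, b, c]) (last [a, b, c]) Z"
  proof (rule padj_chain_not_dsep)
    fix i assume "Suc i < length [a, b, c]"
    then have "i = 0 \<or> i = 1" by auto
    then show "padj E ([a, b, c] ! i) ([a, b, c] ! Suc i)" using assms by auto
  next
    fix i assume "0 < i" "Suc i < length [a, b, c]"
    then show "[a, b, c] ! i \<notin> Z" using assms by (simp add: nth_Cons')
  next
    fix i assume "i < length [a, b, c]"
    then have "i = 0 \<or> i = 1 \<or> i = 2" by auto
    then show "[a, b, c] ! i \<in> An E (Z \<union> {hd [a, b, c], last [a, b, c]})"
      using assms(5) in_An by auto
  qed (use assms in auto)
  then show ?thesis by simp
qed

lemma dconn_walk_collider_in_An:
  "dconn_walk E Z vs ds \<Longrightarrow> 0 < l \<Longrightarrow> l < length ds \<Longrightarrow> ds ! (l - 1) \<Longrightarrow> \<not> ds ! l \<Longrightarrow>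
   vs ! l \<in> An E (Z \<union> T)"
  using dconn_walk_inner An_Un_iff by fastforce

lemma dconn_walk_out_edge_in_An:
  assumes w: "dconn_walk E Z vs ds"
  shows "l < length ds \<Longrightarrow> ds ! l \<Longrightarrow> vs ! l \<in> An E (Z \<union> {last vs})"
proof (induction "length ds - Suc l" arbitrary: l)
  case 0
  then have "Suc l = length ds" by simp
  moreover have "vs \<noteq> []" "length ds = length vs - 1" using dconn_walk_length[OF w] by auto
  then have "vs ! length ds = last vs" by (simp add: last_conv_nth)
  ultimately have "vs ! Suc l \<in> An E (Z \<union> {last vs})" using in_An by simp
  then show ?case using dconn_walk_edge[OF w 0(2)] 0(3) An_anc_trans anc_edge by fastforce
next
  case (Suc d)
  then have "Suc l < length ds" by simp
  then have "vs ! Suc l \<in> An E (Z \<union> {last vs})"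
    using Suc.hyps dconn_walk_collider_in_An[OF w, of "Suc l" "{last vs}"] Suc.prems
    by (cases "ds ! Suc l") auto
  then show ?case using dconn_walk_edge[OF w Suc.prems(1)] Suc.prems(2) An_anc_trans anc_edge
    by fastforce
qed

lemma dconn_walk_in_edge_in_An:
  assumes w: "dconn_walk E Z vs ds"
  shows "l < length ds \<Longrightarrow> \<not> ds ! l \<Longrightarrow> vs ! Suc l \<in> An E (Z \<union> {hd vs})"
proof (induction l)
  case 0
  have "vs \<noteq> []" using dconn_walk_length[OF w] by auto
  then have "vs ! 0 \<in> An E (Z \<union> {hd vs})" by (intro in_An) (simp add: hd_conv_nth)
  then show ?case using dconn_walk_edge[OF w 0(1)] 0(2) An_anc_trans anc_edge by fastforce
next
  case (Suc l)
  have "vs ! Suc l \<in> An E (Z \<union> {hd vs})"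
    using Suc dconn_walk_collider_in_An[OF w, of "Suc l" "{hd vs}"] by (cases "ds ! l") auto
  then show ?case using dconn_walk_edge[OF w Suc.prems(1)] Suc.prems(2) An_anc_trans anc_edge
    by fastforce
qed

lemma dconn_walk_nth_in_An:
  assumes w: "dconn_walk E Z vs ds" and k: "k < length vs"
  shows "vs ! k \<in> An E (Z \<union> {hd vs, last vs})"
proof -
  have len: "length vs \<ge> 2" "length ds = length vs - 1" using dconn_walk_length[OF w] by auto
  then have ne: "vs \<noteq> []" by auto
  have sub: "An E (Z \<union> {last vs}) \<subseteq> An E (Z \<union> {hd vs, last vs})"
    "An E (Z \<union> {hd vs}) \<subseteq> An E (Z \<union> {hd vs, last vs})"
    by (auto simp: An_def)
  consider "k = 0" | "k = length ds" | "0 < k" "k < length ds" "ds ! k"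
    | "0 < k" "k < length ds" "\<not> ds ! (k - 1)" | "0 < k" "k < length ds" "ds ! (k - 1)" "\<not> ds ! k"
    using k len by linarith
  then show ?thesis
  proof cases
    case 1
    then show ?thesis by (intro in_An) (simp add: hd_conv_nth[OF ne])
  next
    case 2
    then show ?thesis using len by (intro in_An) (simp add: last_conv_nth[OF ne])
  next
    case 3
    then show ?thesis using dconn_walk_out_edge_in_An[OF w] sub by blast
  next
    case 4
    then show ?thesis using dconn_walk_in_edge_in_An[OF w, of "k - 1"] sub by auto
  next
    case 5
    then show ?thesis using dconn_walk_collider_in_An[OF w] by blast
  qed
qed

lemma dconn_path_given_An_minus_ends:
  assumes p: "dconn_path E Z vs ds" and ends: "hd vs = a" "last vs = c"
    and Z: "Z = An E S - {a, c}" and S: "a \<in> S" "c \<in> S"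
  shows "(a, c) \<in> E \<or> (c, a) \<in> E \<or> (\<exists>d. (a, d) \<in> E \<and> (c, d) \<in> E \<and> d \<in> An E S)"
proof -
  have w: "dconn_walk E Z vs ds" and dist: "distinct vs" using p by (auto simp: dconn_path_iff)
  have len: "length vs \<ge> 2" "length ds = length vs - 1" using dconn_walk_length[OF w] by auto
  then have "vs \<noteq> []" by auto
  then have v0: "vs ! 0 = a" and vl: "vs ! length ds = c"
    using ends len by (auto simp: hd_conv_nth last_conv_nth)
  have "Z \<union> {hd vs, last vs} \<subseteq> An E S" using Z S ends in_An by blast
  then have An_S: "vs ! k \<in> An E S" if "k < length vs" for k
    using dconn_walk_nth_in_An[OF w that] An_subset_An by blast
  have collider: "ds ! (k - 1) \<and> \<not> ds ! k" if k: "0 < k" "k < length ds" for k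
  proof -
    have kv: "k < length vs" "0 < length vs" "length ds < length vs" using k len by auto
    have "vs ! k \<noteq> vs ! 0" "vs ! k \<noteq> vs ! length ds"
      using nth_eq_iff_index_eq[OF dist kv(1,2)] nth_eq_iff_index_eq[OF dist kv(1,3)] k by auto
    then have "vs ! k \<in> Z" using An_S[of k] k len Z v0 vl by auto
    then show ?thesis using dconn_walk_inner[OF w k] by (auto split: if_splits)
  qed
  have "length ds \<le> 2" using collider[of 1] collider[of 2] by fastforce
  moreover have "length ds \<ge> 1" using len by simp
  ultimately consider "length ds = 1" | "length ds = 2" by linarith
  then show ?thesis
  proof cases
    case 1
    then show ?thesis using dconn_walk_edge[OF w, of 0] v0 vl by (cases "ds ! 0") auto
  next
    case 2
    then have "ds ! 0" "\<not> ds ! 1" using collider[of 1] by auto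
    then show ?thesis
      using dconn_walk_edge[OF w, of 0] dconn_walk_edge[OF w, of 1] An_S[of 1] v0 vl 2 len
      by (auto simp: numeral_2_eq_2)
  qed
qed

section \<open>Partially ordered partitions and strongly connected components\<close>

lemma blk_eqI:
  assumes "partition_on A P" "C \<in> P" "v \<in> C"
  shows "blk P v = C"
  unfolding blk_def
proof (rule the_equality)
  fix C' assume "C' \<in> P \<and> v \<in> C'"
  then show "C' = C" using assms partition_onD2[OF assms(1)] unfolding disjoint_def by blast
qed (use assms in simp)

lemma blk_in_partition:
  assumes "partition_on A P" "v \<in> A"
  shows "blk P v \<in> P" "v \<in> blk P v"
proof -
  obtain C where "C \<in> P" "v \<in> C" using assms partition_onD1[OF assms(1)] by blast
  then show "blk P v \<in> P" "v \<in> blk P v" using blk_eqI[OF assms(1)] by auto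
qed

lemma POPsD:
  assumes "x \<in> POPs n"
  shows "partition_on {1..n} (fst x)" "partial_order_on (fst x) (snd x)"
  using assms unfolding POPs_def by auto

lemma mem_below_iff:
  assumes "x \<in> POPs n"
  shows "v \<in> below x Cs \<longleftrightarrow> v \<in> {1..n} \<and> (\<exists>C\<in>Cs. (blk (fst x) v, C) \<in> snd x)"
proof -
  have part: "partition_on {1..n} (fst x)" using POPsD[OF assms] by simp
  show ?thesis
  proof
    assume "v \<in> below x Cs"
    then obtain C where C: "C \<in> fst x" "v \<in> C" "\<exists>C'\<in>Cs. (C, C') \<in> snd x"
      unfolding below_def by blast
    then show "v \<in> {1..n} \<and> (\<exists>C\<in>Cs. (blk (fst x) v, C) \<in> snd x)"
      using partition_onD1[OF part] blk_eqI[OF part C(1,2)] by auto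
  next
    assume "v \<in> {1..n} \<and> (\<exists>C\<in>Cs. (blk (fst x) v, C) \<in> snd x)"
    then show "v \<in> below x Cs" using blk_in_partition[OF part] unfolding below_def by blast
  qed
qed

lemma blk_order_refl:
  assumes "x \<in> POPs n" "v \<in> {1..n}"
  shows "(blk (fst x) v, blk (fst x) v) \<in> snd x"
  using blk_in_partition(1)[OF POPsD(1)[OF assms(1)] assms(2)]
    partial_order_onD(1)[OF POPsD(2)[OF assms(1)]] unfolding refl_on_def by blast

lemma in_own_below:
  assumes "x \<in> POPs n" "v \<in> {1..n}" "blk (fst x) v \<in> Cs"
  shows "v \<in> below x Cs"
  using assms mem_below_iff blk_order_refl by blast

lemma rtrancl_range:
  assumes "E \<subseteq> A \<times> A" "(u, v) \<in> E\<^sup>*" "u \<noteq> v"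
  shows "u \<in> A" "v \<in> A"
proof -
  from assms(2,3) have "(u, v) \<in> E\<^sup>+" by (simp add: rtrancl_eq_or_trancl)
  then obtain w w' where "(u, w) \<in> E" "(w', v) \<in> E" by (metis converse_tranclE tranclE)
  then show "u \<in> A" "v \<in> A" using assms(1) by auto
qed

lemma scc_self: "i \<in> {1..n} \<Longrightarrow> i \<in> scc n E i"
  unfolding scc_def by auto

lemma scc_eq_iff:
  assumes "i \<in> {1..n}" "j \<in> {1..n}"
  shows "scc n E i = scc n E j \<longleftrightarrow> (i, j) \<in> E\<^sup>* \<and> (j, i) \<in> E\<^sup>*"
proof
  assume "scc n E i = scc n E j"
  then show "(i, j) \<in> E\<^sup>* \<and> (j, i) \<in> E\<^sup>*" using scc_self[OF assms(2)] unfolding scc_def by auto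
qed (auto simp: scc_def intro: rtrancl_trans)

lemma partition_on_scc: "partition_on {1..n} (scc n E ` {1..n})"
proof (rule partition_onI)
  fix p q assume "p \<in> scc n E ` {1..n}" "q \<in> scc n E ` {1..n}" "p \<noteq> q"
  then obtain i j where ij: "i \<in> {1..n}" "j \<in> {1..n}" "p = scc n E i" "q = scc n E j" by blast
  show "disjnt p q"
  proof (rule ccontr)
    assume "\<not> disjnt p q"
    then obtain k where "k \<in> p" "k \<in> q" unfolding disjnt_def by blast
    then have "k \<in> {1..n}" "scc n E i = scc n E k" "scc n E j = scc n E k"
      using ij scc_eq_iff unfolding scc_def by auto
    then show False using ij \<open>p \<noteq> q\<close> by simp
  qed
qed (use scc_self in \<open>auto simp: scc_def\<close>)

lemma fst_pop_of: "fst (pop_of n E) = scc n E ` {1..n}"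
  unfolding pop_of_def Let_def by simp

lemma snd_pop_of: "snd (pop_of n E) = {(C1, C2). C1 \<in> scc n E ` {1..n} \<and> C2 \<in> scc n E ` {1..n} \<and>
          (C1 = C2 \<or> (\<exists>u \<in> C1. \<exists>v \<in> C2. (u, v) \<in> E\<^sup>*))}"
  unfolding pop_of_def Let_def by simp

lemma blk_pop_of: "v \<in> {1..n} \<Longrightarrow> blk (fst (pop_of n E)) v = scc n E v"
  unfolding fst_pop_of by (rule blk_eqI[OF partition_on_scc]) (auto simp: scc_self)

lemma scc_order_pop_of_iff:
  assumes "u \<in> {1..n}" "v \<in> {1..n}"
  shows "(scc n E u, scc n E v) \<in> snd (pop_of n E) \<longleftrightarrow> (u, v) \<in> E\<^sup>*"
proof
  assume "(scc n E u, scc n E v) \<in> snd (pop_of n E)"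
  then consider "scc n E u = scc n E v"
    | u' v' where "u' \<in> scc n E u" "v' \<in> scc n E v" "(u', v') \<in> E\<^sup>*"
    unfolding snd_pop_of by auto
  then show "(u, v) \<in> E\<^sup>*"
  proof cases
    case 1
    then show ?thesis using scc_eq_iff[OF assms] by simp
  next
    case 2
    then have "(u, u') \<in> E\<^sup>*" "(v', v) \<in> E\<^sup>*" unfolding scc_def by auto
    then show ?thesis using 2(3) by (meson rtrancl_trans)
  qed
next
  assume "(u, v) \<in> E\<^sup>*"
  then show "(scc n E u, scc n E v) \<in> snd (pop_of n E)"
    unfolding snd_pop_of using assms scc_self by blast
qed

lemma blk_order_pop_of_iff:
  assumes "u \<in> {1..n}" "v \<in> {1..n}"
  shows "(blk (fst (pop_of n E)) u, blk (fst (pop_of n E)) v) \<in> snd (pop_of n E) \<longleftrightarrow> anc E u v"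
  using scc_order_pop_of_iff[OF assms] blk_pop_of assms unfolding anc_def by simp

lemma pop_of_in_POPs: "pop_of n E \<in> POPs n"
proof -
  let ?P = "scc n E ` {1..n}" and ?R = "snd (pop_of n E)"
  have R: "?R \<subseteq> ?P \<times> ?P" unfolding snd_pop_of by auto
  have "refl_on ?P ?R" using R unfolding refl_on_def snd_pop_of by auto
  moreover have "trans ?R"
  proof (rule transI)
    fix C1 C2 C3 assume a: "(C1, C2) \<in> ?R" "(C2, C3) \<in> ?R"
    then obtain u v w where uvw: "u \<in> {1..n}" "v \<in> {1..n}" "w \<in> {1..n}"
      "C1 = scc n E u" "C2 = scc n E v" "C3 = scc n E w" using R by blast
    have "(u, v) \<in> E\<^sup>*" "(v, w) \<in> E\<^sup>*"
      using a scc_order_pop_of_iff uvw by simp_all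
    then have "(u, w) \<in> E\<^sup>*" by (rule rtrancl_trans)
    then show "(C1, C3) \<in> ?R" using scc_order_pop_of_iff[OF uvw(1,3)] uvw(4,6) by simp
  qed
  moreover have "antisym ?R"
  proof (rule antisymI)
    fix C1 C2 assume a: "(C1, C2) \<in> ?R" "(C2, C1) \<in> ?R"
    then obtain u v where uv: "u \<in> {1..n}" "v \<in> {1..n}" "C1 = scc n E u" "C2 = scc n E v"
      using R by blast
    have "(u, v) \<in> E\<^sup>*" "(v, u) \<in> E\<^sup>*" using a scc_order_pop_of_iff uv by simp_all
    then show "C1 = C2" using scc_eq_iff[OF uv(1,2)] uv(3,4) by simp
  qed
  ultimately have "partial_order_on ?P ?R"
    unfolding partial_order_on_def preorder_on_def using R by blast
  then have "partition_on {1..n} (fst (pop_of n E)) \<and>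
      partial_order_on (fst (pop_of n E)) (snd (pop_of n E))"
    using partition_on_scc fst_pop_of by simp
  then show ?thesis unfolding POPs_def by (cases "pop_of n E") simp
qed

lemma below_pop_of:
  assumes "E \<subseteq> {1..n} \<times> {1..n}" "S \<subseteq> {1..n}"
  shows "below (pop_of n E) (blk (fst (pop_of n E)) ` S) = An E S"
proof -
  have "v \<in> below (pop_of n E) (blk (fst (pop_of n E)) ` S) \<longleftrightarrow> v \<in> {1..n} \<and> v \<in> An E S" for v
  proof -
    have "v \<in> below (pop_of n E) (blk (fst (pop_of n E)) ` S) \<longleftrightarrow>
        v \<in> {1..n} \<and> (\<exists>s\<in>S. (blk (fst (pop_of n E)) v, blk (fst (pop_of n E)) s) \<in> snd (pop_of n E))"
      using mem_below_iff[OF pop_of_in_POPs] by blast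
    also have "\<dots> \<longleftrightarrow> v \<in> {1..n} \<and> (\<exists>s\<in>S. anc E v s)"
    proof -
      have "(blk (fst (pop_of n E)) v, blk (fst (pop_of n E)) s) \<in> snd (pop_of n E) \<longleftrightarrow> anc E v s"
        if "v \<in> {1..n}" "s \<in> S" for s
        using blk_order_pop_of_iff that assms(2) by blast
      then show ?thesis by blast
    qed
    finally show ?thesis unfolding An_def by simp
  qed
  moreover have "An E S \<subseteq> {1..n}"
  proof
    fix v assume "v \<in> An E S"
    then obtain s where "s \<in> S" "(v, s) \<in> E\<^sup>*" unfolding An_def anc_def by blast
    then show "v \<in> {1..n}" using rtrancl_range(1)[OF assms(1)] assms(2) by (cases "v = s") auto
  qed
  ultimately show ?thesis by blast
qed

section \<open>The criteria E1 to E4\<close>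

lemma argmin_on_card_eq:
  assumes "x0 \<in> X" and "\<And>x. x \<in> X \<Longrightarrow> g x0 \<subseteq> g x" and "\<And>x. x \<in> X \<Longrightarrow> finite (g x)"
  shows "argmin_on X (\<lambda>x. card (g x)) = {x \<in> X. g x = g x0}"
proof -
  have "card (g x) \<le> card (g x0) \<longleftrightarrow> g x = g x0" if "x \<in> X" for x
    using card_subset_eq[OF assms(3) assms(2)] card_mono[OF assms(3) assms(2)] that by fastforce
  moreover have "card (g x0) \<le> card (g y)" if "y \<in> X" for y
    using card_mono[OF assms(3) assms(2)] that by blast
  ultimately show ?thesis using assms(1) unfolding argmin_on_def by (auto intro: order_trans)
qed

lemma argmax_on_card_eq:
  assumes "x0 \<in> X" and "\<And>x. x \<in> X \<Longrightarrow> g x \<subseteq> g x0" and "finite (g x0)"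
  shows "argmax_on X (\<lambda>x. card (g x)) = {x \<in> X. g x = g x0}"
proof -
  have "card (g x0) \<le> card (g x) \<longleftrightarrow> g x = g x0" if "x \<in> X" for x
    using card_subset_eq[OF assms(3) assms(2)] card_mono[OF assms(3) assms(2)] that by fastforce
  moreover have "card (g y) \<le> card (g x0)" if "y \<in> X" for y
    using card_mono[OF assms(3) assms(2)] that by blast
  ultimately show ?thesis using assms(1) unfolding argmax_on_def by (auto intro: order_trans)
qed

lemma padj_sym: "padj E a b \<Longrightarrow> padj E b a"
  unfolding padj_def by blast

lemma padj_range:
  assumes "E \<subseteq> {1..n} \<times> {1..n}" "padj E a b"
  shows "a \<in> {1..n}" "b \<in> {1..n}"
  using assms unfolding padj_def by auto

lemma finite_E1: "finite (E1 n E x)"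
  by (rule finite_subset[of _ "{1..n} \<times> {1..n}"]) (auto simp: E1_def)

lemma finite_E2: "finite (E2 n E x)"
  by (rule finite_subset[of _ "{1..n} \<times> {1..n} \<times> {1..n}"]) (auto simp: E2_def E1_def)

lemma finite_E3: "finite (E3 n E x)"
  by (rule finite_subset[of _ "{1..n} \<times> {1..n} \<times> {1..n}"]) (auto simp: E3_def E1_def)

lemma finite_E4: "finite (E4 n E x)"
  by (rule finite_subset[of _ "({1..n} \<times> {1..n} \<times> {1..n}) \<times> ({1..n} \<times> {1..n} \<times> {1..n})"])
    (auto simp: E4_def E1_def)

lemma padj_subset_E1:
  assumes "E \<subseteq> {1..n} \<times> {1..n}"
  shows "{(a, b). padj E a b} \<subseteq> E1 n E x"
proof (intro subsetI)
  fix p assume "p \<in> {(a, b). padj E a b}"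
  then obtain a b where "p = (a, b)" "padj E a b" by blast
  then show "p \<in> E1 n E x"
    using padj_range[OF assms] padj_not_dsep unfolding E1_def padj_def by blast
qed

lemma E1_pop_of:
  assumes E: "E \<subseteq> {1..n} \<times> {1..n}"
  shows "E1 n E (pop_of n E) = {(a, b). padj E a b}"
proof (intro equalityI subsetI)
  fix p assume "p \<in> E1 n E (pop_of n E)"
  then obtain a b where p: "p = (a, b)" "a \<in> {1..n}" "b \<in> {1..n}" "a \<noteq> b"
    and nd: "\<not> dsep E a b (below (pop_of n E) (blk (fst (pop_of n E)) ` {a, b}) - {a, b})"
    unfolding E1_def by auto
  then obtain vs ds where "dconn_path E (An E {a, b} - {a, b}) vs ds" "hd vs = a" "last vs = b"
    using below_pop_of[OF E, of "{a, b}"] unfolding dsep_def by auto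
  then have "(a, b) \<in> E \<or> (b, a) \<in> E \<or> (\<exists>d. (a, d) \<in> E \<and> (b, d) \<in> E \<and> d \<in> An E {a, b})"
    by (rule dconn_path_given_An_minus_ends) auto
  then show "p \<in> {(a, b). padj E a b}" using p unfolding padj_def An_def by auto
qed (use padj_subset_E1[OF E] in blast)

lemma S1_eq:
  assumes E: "E \<subseteq> {1..n} \<times> {1..n}"
  shows "S1 n E = {x \<in> POPs n. E1 n E x = {(a, b). padj E a b}}"
proof -
  have "S1 n E = {x \<in> POPs n. E1 n E x = E1 n E (pop_of n E)}"
    unfolding S1_def
  proof (rule argmin_on_card_eq)
    show "E1 n E (pop_of n E) \<subseteq> E1 n E x" for x
      unfolding E1_pop_of[OF E] by (rule padj_subset_E1[OF E])
  qed (use pop_of_in_POPs finite_E1 in auto)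
  then show ?thesis unfolding E1_pop_of[OF E] .
qed

lemma E2_pop_of_imp:
  assumes E: "E \<subseteq> {1..n} \<times> {1..n}" and x: "x \<in> POPs n" "E1 n E x = {(a, b). padj E a b}"
    and abc: "(a, b, c) \<in> E2 n E (pop_of n E)"
  shows "(a, b, c) \<in> E2 n E x"
proof -
  have h: "a \<noteq> b" "a \<noteq> c" "b \<noteq> c" "padj E a b" "padj E c b" "\<not> padj E a c"
    and ord: "(blk (fst (pop_of n E)) b, blk (fst (pop_of n E)) a) \<in> snd (pop_of n E) \<or>
      (blk (fst (pop_of n E)) b, blk (fst (pop_of n E)) c) \<in> snd (pop_of n E)"
    using abc unfolding E2_def E1_pop_of[OF E] by auto
  have r: "a \<in> {1..n}" "b \<in> {1..n}" "c \<in> {1..n}"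
    using padj_range[OF E h(4)] padj_range[OF E h(5)] by auto
  have "anc E b a \<or> anc E b c" using ord blk_order_pop_of_iff r by simp
  then have b_An: "b \<in> An E {a, c}" unfolding An_def by blast
  show ?thesis
  proof (rule ccontr)
    assume "(a, b, c) \<notin> E2 n E x"
    then have "b \<notin> below x {blk (fst x) a, blk (fst x) c}"
      using h x(2) mem_below_iff[OF x(1)] unfolding E2_def by auto
    moreover have "dsep E a c (below x {blk (fst x) a, blk (fst x) c} - {a, c})"
      using h r x(2) unfolding E1_def by auto
    ultimately show False
      using padj_padj_not_dsep[OF h(4) padj_sym[OF h(5)] h(2)] b_An An_Un_iff by blast
  qed
qed

lemma S2_eq:
  assumes E: "E \<subseteq> {1..n} \<times> {1..n}"
  shows "S2 n E = {x \<in> S1 n E. E2 n E x = E2 n E (pop_of n E)}"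
  unfolding S2_def
proof (rule argmin_on_card_eq)
  show "pop_of n E \<in> S1 n E" using S1_eq[OF E] pop_of_in_POPs E1_pop_of[OF E] by simp
  show "E2 n E (pop_of n E) \<subseteq> E2 n E x" if "x \<in> S1 n E" for x
  proof -
    have x: "x \<in> POPs n" "E1 n E x = {(a, b). padj E a b}" using that S1_eq[OF E] by auto
    then show ?thesis using E2_pop_of_imp[OF E x] by auto
  qed
qed (rule finite_E2)

lemma E3_pop_of_imp:
  assumes E: "E \<subseteq> {1..n} \<times> {1..n}" and x: "x \<in> POPs n" "E1 n E x = {(a, b). padj E a b}"
    and abc: "(a, b, c) \<in> E3 n E (pop_of n E)"
  shows "(a, b, c) \<in> E3 n E x"
proof -
  have h: "a \<noteq> b" "a \<noteq> c" "b \<noteq> c" "padj E a b" "padj E c b" "\<not> padj E a c"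
    and nd: "\<not> dsep E a c (below (pop_of n E) (blk (fst (pop_of n E)) ` {a, b, c}) - {a, c})"
    using abc unfolding E3_def E1_pop_of[OF E] by auto
  have r: "a \<in> {1..n}" "b \<in> {1..n}" "c \<in> {1..n}"
    using padj_range[OF E h(4)] padj_range[OF E h(5)] by auto
  obtain vs ds where "dconn_path E (An E {a, b, c} - {a, c}) vs ds" "hd vs = a" "last vs = c"
    using nd below_pop_of[OF E, of "{a, b, c}"] r unfolding dsep_def by auto
  then have "(a, c) \<in> E \<or> (c, a) \<in> E \<or> (\<exists>d. (a, d) \<in> E \<and> (c, d) \<in> E \<and> d \<in> An E {a, b, c})"
    by (rule dconn_path_given_An_minus_ends) auto
  then obtain d where d: "(a, d) \<in> E" "(c, d) \<in> E" "anc E d b"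
    using h(2,6) unfolding padj_def An_def by blast
  define Z where "Z = below x {blk (fst x) a, blk (fst x) b, blk (fst x) c} - {a, c}"
  have "b \<in> Z" using in_own_below[OF x(1) r(2)] h unfolding Z_def by auto
  then have "d \<in> An E Z" using d(3) unfolding An_def by blast
  then have "dreach E Z a c False"
    using dreach.extend_collider[OF dreach.out_edge[OF d(1)] _ d(2)] by blast
  then have "\<not> dsep E a c Z" using dreach_not_dsep h(2) by blast
  then show ?thesis using h r x(2) unfolding E3_def Z_def by auto
qed

lemma S3_eq:
  assumes E: "E \<subseteq> {1..n} \<times> {1..n}"
  shows "S3 n E = {x \<in> S2 n E. E3 n E x = E3 n E (pop_of n E)}"
  unfolding S3_def
proof (rule argmin_on_card_eq)
  show "pop_of n E \<in> S2 n E" using S2_eq[OF E] S1_eq[OF E] pop_of_in_POPs E1_pop_of[OF E] by simp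
  show "E3 n E (pop_of n E) \<subseteq> E3 n E x" if "x \<in> S2 n E" for x
  proof -
    have x: "x \<in> POPs n" "E1 n E x = {(a, b). padj E a b}" using that S2_eq[OF E] S1_eq[OF E] by auto
    then show ?thesis using E3_pop_of_imp[OF E x] by auto
  qed
qed (rule finite_E3)

lemma E4_pop_of_imp:
  assumes E: "E \<subseteq> {1..n} \<times> {1..n}" and x: "x \<in> POPs n" "E1 n E x = {(a, b). padj E a b}"
    and x2: "E2 n E x = E2 n E (pop_of n E)" and x3: "E3 n E x = E3 n E (pop_of n E)"
    and p: "((a, b1, c), (a', b2, c')) \<in> E4 n E (pop_of n E)"
  shows "((a, b1, c), (a', b2, c')) \<in> E4 n E x"
proof -
  have h: "a' = a" "c' = c" "a \<noteq> c" "b2 \<noteq> a" "b2 \<noteq> c"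
    "padj E a b1" "padj E c b1" "padj E a b2" "padj E c b2" "\<not> padj E a c"
    "(a, b1, c) \<notin> E2 n E x" "(a, b2, c) \<notin> E3 n E x"
    and ord: "(blk (fst (pop_of n E)) b1, blk (fst (pop_of n E)) b2) \<in> snd (pop_of n E)"
    using p x2 x3 unfolding E4_def E1_pop_of[OF E] by auto
  have r: "b1 \<in> {1..n}" "b2 \<in> {1..n}"
    using padj_range[OF E h(6)] padj_range[OF E h(8)] by auto
  have "anc E b1 b2" using ord blk_order_pop_of_iff r by simp
  have "(blk (fst x) b1, blk (fst x) b2) \<in> snd x"
  proof (rule ccontr)
    assume b1_b2: "\<not> ?thesis"
    define Z where "Z = below x {blk (fst x) a, blk (fst x) b2, blk (fst x) c} - {a, c}"
    have "b1 \<notin> Z" using h b1_b2 x(2) mem_below_iff[OF x(1)] unfolding E2_def Z_def by auto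
    have "b2 \<in> Z" using in_own_below[OF x(1) r(2)] h unfolding Z_def by auto
    then have "b1 \<in> An E Z" using \<open>anc E b1 b2\<close> unfolding An_def by blast
    then have "\<not> dsep E a c Z"
      using padj_padj_not_dsep[OF h(6) padj_sym[OF h(7)] h(3) \<open>b1 \<notin> Z\<close>] An_Un_iff by blast
    then show False using h x(2) padj_range[OF E h(6)] padj_range[OF E h(8)]
      unfolding E3_def Z_def by auto
  qed
  then show ?thesis using p x(2) x2 x3 unfolding E4_def E1_pop_of[OF E] by auto
qed

lemma S4_eq:
  assumes E: "E \<subseteq> {1..n} \<times> {1..n}"
  shows "S4 n E = {x \<in> S3 n E. E4 n E x = E4 n E (pop_of n E)}"
  unfolding S4_def
proof (rule argmin_on_card_eq)
  show "pop_of n E \<in> S3 n E"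
    using S3_eq[OF E] S2_eq[OF E] S1_eq[OF E] pop_of_in_POPs E1_pop_of[OF E] by simp
  show "E4 n E (pop_of n E) \<subseteq> E4 n E x" if "x \<in> S3 n E" for x
  proof -
    have x: "x \<in> POPs n" "E1 n E x = {(a, b). padj E a b}"
      "E2 n E x = E2 n E (pop_of n E)" "E3 n E x = E3 n E (pop_of n E)"
      using that S3_eq[OF E] S2_eq[OF E] S1_eq[OF E] by auto
    then show ?thesis using E4_pop_of_imp[OF E x] by auto
  qed
qed (rule finite_E4)

section \<open>Uncovered itineraries and the sets D(t)\<close>

definition uncovered_itinerary :: "(nat \<times> nat) set \<Rightarrow> nat list \<Rightarrow> bool" where
  "uncovered_itinerary E as \<longleftrightarrow> distinct as \<and>
     (\<forall>i. Suc i < length as \<longrightarrow> padj E (as ! i) (as ! Suc i)) \<and>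
     (\<forall>i j. i < length as \<longrightarrow> j + 2 \<le> i \<longrightarrow> \<not> padj E (as ! i) (as ! j))"

lemma uncovered_itinerary_take_drop:
  assumes "uncovered_itinerary E as"
  shows "uncovered_itinerary E (take m (drop k as))"
proof -
  have "padj E (as ! (k + i)) (as ! (k + Suc i))" if "Suc (k + i) < length as" for i
    using assms that unfolding uncovered_itinerary_def by simp
  moreover have "\<not> padj E (as ! (k + i)) (as ! (k + j))" if "k + i < length as" "j + 2 \<le> i" for i j
    using assms that unfolding uncovered_itinerary_def by simp
  ultimately show ?thesis
    using assms unfolding uncovered_itinerary_def
    by (cases "k \<le> length as") (auto simp: distinct_take distinct_drop nth_drop)
qed

lemma uncovered_itinerary_range:
  assumes E: "E \<subseteq> {1..n} \<times> {1..n}" and it: "uncovered_itinerary E as" and len: "length as \<ge> 2"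
  shows "set as \<subseteq> {1..n}"
proof
  fix v assume "v \<in> set as"
  then obtain k where k: "k < length as" "as ! k = v" by (auto simp: in_set_conv_nth)
  have chain: "padj E (as ! i) (as ! Suc i)" if "Suc i < length as" for i
    using it that unfolding uncovered_itinerary_def by blast
  show "v \<in> {1..n}"
  proof (cases "Suc k < length as")
    case True
    then show ?thesis using chain padj_range[OF E] k(2) by blast
  next
    case False
    then have "Suc (k - 1) < length as" "Suc (k - 1) = k" using k(1) len by auto
    then show ?thesis using chain[of "k - 1"] padj_range[OF E] k(2) by metis
  qed
qed

lemma anc_chain_iff_strongly_connected:
  "((\<forall>i\<in>{1..t-1}. anc E (as ! i) (as ! (i + 1))) \<and> (\<forall>i\<in>{2..t}. anc E (as ! i) (as ! (i - 1))))
   \<longleftrightarrow> (\<forall>i\<in>{1..t}. anc E (as ! i) (as ! 1) \<and> anc E (as ! 1) (as ! i))"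
proof
  assume fwd_bwd: "(\<forall>i\<in>{1..t-1}. anc E (as ! i) (as ! (i + 1))) \<and>
    (\<forall>i\<in>{2..t}. anc E (as ! i) (as ! (i - 1)))"
  have "anc E (as ! i) (as ! 1) \<and> anc E (as ! 1) (as ! i)" if "1 \<le> i" "i \<le> t" for i
    using that
  proof (induction i rule: dec_induct)
    case (step i)
    then have "i \<in> {1..t-1}" "Suc i \<in> {2..t}" by auto
    then have "anc E (as ! i) (as ! Suc i)" "anc E (as ! Suc i) (as ! i)"
      using bspec[OF fwd_bwd[THEN conjunct1]] bspec[OF fwd_bwd[THEN conjunct2]] by fastforce+
    moreover have "anc E (as ! i) (as ! 1) \<and> anc E (as ! 1) (as ! i)" using step by simp
    ultimately show ?case using anc_trans[of E "as ! Suc i" "as ! i" "as ! 1"]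
        anc_trans[of E "as ! 1" "as ! i" "as ! Suc i"] by blast
  qed simp
  then show "\<forall>i\<in>{1..t}. anc E (as ! i) (as ! 1) \<and> anc E (as ! 1) (as ! i)" by simp
next
  assume "\<forall>i\<in>{1..t}. anc E (as ! i) (as ! 1) \<and> anc E (as ! 1) (as ! i)"
  then have scc: "anc E (as ! i) (as ! j)" if "i \<in> {1..t}" "j \<in> {1..t}" for i j
    using that anc_trans[of E "as ! i" "as ! 1" "as ! j"] by blast
  have "anc E (as ! i) (as ! (i + 1))" if "i \<in> {1..t-1}" for i
    by (rule scc) (use that in auto)
  moreover have "anc E (as ! i) (as ! (i - 1))" if "i \<in> {2..t}" for i
    by (rule scc) (use that in auto)
  ultimately show "(\<forall>i\<in>{1..t-1}. anc E (as ! i) (as ! (i + 1))) \<and>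
    (\<forall>i\<in>{2..t}. anc E (as ! i) (as ! (i - 1)))" by blast
qed

lemma mutex_iff:
  "mutex E t as \<longleftrightarrow> 1 \<le> t \<and> length as = t + 2 \<and> uncovered_itinerary E as \<and>
     (\<forall>i\<in>{1..t}. anc E (as ! i) (as ! 1) \<and> anc E (as ! 1) (as ! i)) \<and>
     \<not> anc E (as ! 1) (as ! 0) \<and> \<not> anc E (as ! 1) (as ! (t + 1))"
proof (cases "length as = t + 2")
  case True
  have steps: "(\<forall>i\<in>{1..t+1}. padj E (as ! i) (as ! (i - 1))) \<longleftrightarrow>
      (\<forall>i. Suc i < length as \<longrightarrow> padj E (as ! i) (as ! Suc i))"
  proof
    assume backward: "\<forall>i\<in>{1..t+1}. padj E (as ! i) (as ! (i - 1))"
    have "padj E (as ! i) (as ! Suc i)" if "Suc i < length as" for i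
    proof -
      have "Suc i \<in> {1..t+1}" using that True by simp
      then have "padj E (as ! Suc i) (as ! (Suc i - 1))" using backward by blast
      then show ?thesis using padj_sym by simp
    qed
    then show "\<forall>i. Suc i < length as \<longrightarrow> padj E (as ! i) (as ! Suc i)" by blast
  next
    assume chain: "\<forall>i. Suc i < length as \<longrightarrow> padj E (as ! i) (as ! Suc i)"
    have "padj E (as ! i) (as ! (i - 1))" if "i \<in> {1..t+1}" for i
    proof -
      have "Suc (i - 1) < length as" "Suc (i - 1) = i" using that True by auto
      then show ?thesis using chain padj_sym by metis
    qed
    then show "\<forall>i\<in>{1..t+1}. padj E (as ! i) (as ! (i - 1))" by blast
  qed
  have "i \<in> {2..t+1} \<longleftrightarrow> i < length as \<and> 2 \<le> i" for i using True by auto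
  then have chords: "(\<forall>i\<in>{2..t+1}. \<forall>j. j + 2 \<le> i \<longrightarrow> \<not> padj E (as ! i) (as ! j)) \<longleftrightarrow>
      (\<forall>i j. i < length as \<longrightarrow> j + 2 \<le> i \<longrightarrow> \<not> padj E (as ! i) (as ! j))"
    by (metis le_add2 le_trans)
  have "mutex E t as \<longleftrightarrow> 1 \<le> t \<and> length as = t + 2 \<and> distinct as \<and>
     (\<forall>i\<in>{1..t+1}. padj E (as ! i) (as ! (i - 1))) \<and>
     (\<forall>i\<in>{2..t+1}. \<forall>j. j + 2 \<le> i \<longrightarrow> \<not> padj E (as ! i) (as ! j)) \<and>
     ((\<forall>i\<in>{1..t-1}. anc E (as ! i) (as ! (i + 1))) \<and> (\<forall>i\<in>{2..t}. anc E (as ! i) (as ! (i - 1)))) \<and>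
     \<not> anc E (as ! 1) (as ! 0) \<and> \<not> anc E (as ! 1) (as ! (t + 1))"
    unfolding mutex_def by (simp only: conj_assoc)
  also have "\<dots> \<longleftrightarrow> 1 \<le> t \<and> length as = t + 2 \<and> uncovered_itinerary E as \<and>
     (\<forall>i\<in>{1..t}. anc E (as ! i) (as ! 1) \<and> anc E (as ! 1) (as ! i)) \<and>
     \<not> anc E (as ! 1) (as ! 0) \<and> \<not> anc E (as ! 1) (as ! (t + 1))"
    unfolding steps chords anc_chain_iff_strongly_connected uncovered_itinerary_def
    by (simp only: conj_assoc)
  finally show ?thesis .
next
  case False
  then show ?thesis unfolding mutex_def by blast
qed

lemma Dt_iff:
  assumes E: "E \<subseteq> {1..n} \<times> {1..n}" and x1: "E1 n E x = {(a, b). padj E a b}"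
  shows "as \<in> Dt n E t x \<longleftrightarrow> length as = t + 2 \<and> uncovered_itinerary E as \<and>
     (\<forall>i\<in>{1..t}. blk (fst x) (as ! i) = blk (fst x) (as ! 1)) \<and>
     \<not> ((blk (fst x) (as ! 1), blk (fst x) (as ! 0)) \<in> snd x \<or>
        (blk (fst x) (as ! 1), blk (fst x) (as ! (t + 1))) \<in> snd x)"
    (is "_ \<longleftrightarrow> ?len \<and> ?it \<and> ?blk \<and> ?ord")
proof
  assume "as \<in> Dt n E t x"
  then have len: ?len and dist: "distinct as"
    and steps: "\<forall>i\<le>t. (as ! i, as ! (i + 1)) \<in> E1 n E x"
    and chords: "\<forall>i\<in>{2..t+1}. \<forall>j. j + 2 \<le> i \<longrightarrow> (as ! i, as ! j) \<notin> E1 n E x"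
    and ?blk ?ord
    unfolding Dt_def by blast+
  moreover have ?it
    unfolding uncovered_itinerary_def
  proof (intro conjI allI impI)
    fix i assume "Suc i < length as"
    then show "padj E (as ! i) (as ! Suc i)" using steps len x1 by simp
  next
    fix i j assume "i < length as" "j + 2 \<le> i"
    then have "i \<in> {2..t+1}" using len by simp
    then show "\<not> padj E (as ! i) (as ! j)" using chords \<open>j + 2 \<le> i\<close> x1 by blast
  qed (rule dist)
  ultimately show "?len \<and> ?it \<and> ?blk \<and> ?ord" by blast
next
  assume r: "?len \<and> ?it \<and> ?blk \<and> ?ord"
  then have len: ?len and it: ?it by blast+
  have "set as \<subseteq> {1..n}" using uncovered_itinerary_range[OF E it] len by simp
  moreover have "\<forall>i\<le>t. (as ! i, as ! (i + 1)) \<in> E1 n E x"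
    using it len x1 unfolding uncovered_itinerary_def by simp
  moreover have "\<forall>i\<in>{2..t+1}. \<forall>j. j + 2 \<le> i \<longrightarrow> (as ! i, as ! j) \<notin> E1 n E x"
    using it len x1 unfolding uncovered_itinerary_def by simp
  moreover have "distinct as" using it unfolding uncovered_itinerary_def by blast
  ultimately show "as \<in> Dt n E t x" using r unfolding Dt_def mem_Collect_eq by blast
qed

lemma Dt_pop_of_iff_mutex:
  assumes E: "E \<subseteq> {1..n} \<times> {1..n}" and t: "1 \<le> t"
  shows "as \<in> Dt n E t (pop_of n E) \<longleftrightarrow> mutex E t as"
proof (cases "length as = t + 2 \<and> uncovered_itinerary E as")
  case True
  then have "set as \<subseteq> {1..n}" using uncovered_itinerary_range[OF E] by simp
  then have r: "as ! i \<in> {1..n}" if "i < t + 2" for i using True that by (simp add: subset_iff)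
  have "blk (fst (pop_of n E)) (as ! i) = blk (fst (pop_of n E)) (as ! 1) \<longleftrightarrow>
      anc E (as ! i) (as ! 1) \<and> anc E (as ! 1) (as ! i)" if "i \<in> {1..t}" for i
    using blk_pop_of scc_eq_iff r that t unfolding anc_def by simp
  then have blk: "(\<forall>i\<in>{1..t}. blk (fst (pop_of n E)) (as ! i) = blk (fst (pop_of n E)) (as ! 1))
      \<longleftrightarrow> (\<forall>i\<in>{1..t}. anc E (as ! i) (as ! 1) \<and> anc E (as ! 1) (as ! i))"
    by blast
  have ord: "(blk (fst (pop_of n E)) (as ! 1), blk (fst (pop_of n E)) (as ! j)) \<in> snd (pop_of n E)
      \<longleftrightarrow> anc E (as ! 1) (as ! j)" if "j < t + 2" for j
    using blk_order_pop_of_iff r that t by simp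
  have ord0: "(blk (fst (pop_of n E)) (as ! 1), blk (fst (pop_of n E)) (as ! 0)) \<in> snd (pop_of n E)
      \<longleftrightarrow> anc E (as ! 1) (as ! 0)"
    and ord1: "(blk (fst (pop_of n E)) (as ! 1), blk (fst (pop_of n E)) (as ! (t + 1))) \<in> snd (pop_of n E)
      \<longleftrightarrow> anc E (as ! 1) (as ! (t + 1))"
    by (rule ord, simp)+
  show ?thesis
    unfolding Dt_iff[OF E E1_pop_of[OF E]] mutex_iff blk ord0 ord1 using True t by blast
next
  case False
  then show ?thesis by (auto simp: Dt_iff[OF E E1_pop_of[OF E]] mutex_iff)
qed

lemma Dt_one_iff:
  assumes E: "E \<subseteq> {1..n} \<times> {1..n}" and x1: "E1 n E x = {(a, b). padj E a b}"
  shows "as \<in> Dt n E 1 x \<longleftrightarrow>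
    length as = 3 \<and> uncovered_itinerary E as \<and> (as ! 0, as ! 1, as ! 2) \<notin> E2 n E x"
proof (cases "length as = 3 \<and> uncovered_itinerary E as")
  case True
  then have "distinct as" "padj E (as ! 0) (as ! 1)" "padj E (as ! 1) (as ! 2)"
    "\<not> padj E (as ! 2) (as ! 0)"
    unfolding uncovered_itinerary_def by (auto simp: numeral_2_eq_2)
  then have "as ! 0 \<noteq> as ! 1" "as ! 0 \<noteq> as ! 2" "as ! 1 \<noteq> as ! 2"
    "padj E (as ! 0) (as ! 1)" "padj E (as ! 2) (as ! 1)" "\<not> padj E (as ! 0) (as ! 2)"
    using True padj_sym by (auto simp: nth_eq_iff_index_eq)
  then show ?thesis
    unfolding Dt_iff[OF E x1] E2_def x1 using True by (auto simp: numeral_2_eq_2)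
next
  case False
  then show ?thesis unfolding Dt_iff[OF E x1] by auto
qed

lemma Dt_one_S2:
  assumes E: "E \<subseteq> {1..n} \<times> {1..n}" and x: "x \<in> S2 n E"
  shows "Dt n E 1 x = Dt n E 1 (pop_of n E)"
proof -
  have x1: "E1 n E x = {(a, b). padj E a b}" and x2: "E2 n E x = E2 n E (pop_of n E)"
    using x S2_eq[OF E] S1_eq[OF E] by auto
  show ?thesis
  proof (rule set_eqI)
    fix as
    show "as \<in> Dt n E 1 x \<longleftrightarrow> as \<in> Dt n E 1 (pop_of n E)"
      unfolding Dt_one_iff[OF E x1] Dt_one_iff[OF E E1_pop_of[OF E]] x2 ..
  qed
qed

lemma finite_ex_anc_maximal:
  assumes A: "finite A" "E \<subseteq> A \<times> A" and "k0 \<in> K"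
  shows "\<exists>k\<in>K. \<forall>m\<in>K. anc E k m \<longrightarrow> anc E m k"
proof -
  define D where "D u = {w. anc E u w}" for u
  have fin: "finite (D u)" for u
  proof (rule finite_subset)
    show "D u \<subseteq> insert u A" using rtrancl_range(2)[OF A(2)] unfolding D_def anc_def by blast
  qed (use A(1) in simp)
  obtain k where k: "k \<in> K" and least: "\<And>m. m \<in> K \<Longrightarrow> card (D k) \<le> card (D m)"
    using ex_has_least_nat[of "\<lambda>k. k \<in> K" k0 "\<lambda>k. card (D k)"] \<open>k0 \<in> K\<close> by blast
  have "anc E m k" if m: "m \<in> K" "anc E k m" for m
  proof (rule ccontr)
    assume "\<not> anc E m k"
    then have "D m \<subset> D k" using m(2) anc_trans unfolding D_def by fastforce
    then have "card (D m) < card (D k)" using fin by (rule psubset_card_mono[rotated])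
    then show False using least[OF m(1)] by simp
  qed
  then show ?thesis using k by blast
qed

lemma ex_run_start:
  fixes k lo :: nat
  assumes "P k" "\<not> P lo" "lo < k"
  shows "\<exists>i. lo < i \<and> i \<le> k \<and> (\<forall>l. i \<le> l \<and> l \<le> k \<longrightarrow> P l) \<and> \<not> P (i - 1)"
  using assms
proof (induction k)
  case (Suc k)
  show ?case
  proof (cases "P k")
    case True
    then have "lo < k" using Suc.prems by (cases "lo = k") auto
    then obtain i where "lo < i" "i \<le> k" "\<forall>l. i \<le> l \<and> l \<le> k \<longrightarrow> P l" "\<not> P (i - 1)"
      using Suc.IH True Suc.prems(2) by blast
    then show ?thesis using Suc.prems(1) le_Suc_eq by (intro exI[of _ i]) auto
  next
    case False
    then show ?thesis using Suc.prems by (intro exI[of _ "Suc k"]) (auto simp: le_Suc_eq)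
  qed
qed simp

lemma ex_run_end:
  fixes k hi :: nat
  assumes "P k" "\<not> P hi" "k < hi"
  shows "\<exists>j. k \<le> j \<and> j < hi \<and> (\<forall>l. k \<le> l \<and> l \<le> j \<longrightarrow> P l) \<and> \<not> P (Suc j)"
  using assms
proof (induction "hi - k" arbitrary: k)
  case (Suc d)
  show ?case
  proof (cases "P (Suc k)")
    case True
    then have "Suc k < hi" using Suc.prems by (cases "Suc k = hi") auto
    moreover have "d = hi - Suc k" using Suc.hyps(2) by arith
    ultimately obtain j where j: "Suc k \<le> j" "j < hi" "\<forall>l. Suc k \<le> l \<and> l \<le> j \<longrightarrow> P l" "\<not> P (Suc j)"
      using Suc.hyps(1)[of "Suc k"] True Suc.prems(2) by blast
    have "P l" if "k \<le> l" "l \<le> j" for l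
      using j(3) Suc.prems(1) that by (cases "l = k") auto
    then show ?thesis using j by (intro exI[of _ j]) auto
  next
    case False
    then show ?thesis using Suc.prems by (intro exI[of _ k]) auto
  qed
qed simp

lemma mutex_segment:
  assumes it: "uncovered_itinerary E as" and ij: "1 \<le> i" "i \<le> j" "Suc j < length as"
    and scc: "\<And>l. i \<le> l \<Longrightarrow> l \<le> j \<Longrightarrow> anc E (as ! l) (as ! i) \<and> anc E (as ! i) (as ! l)"
    and ends: "\<not> anc E (as ! i) (as ! (i - 1))" "\<not> anc E (as ! i) (as ! Suc j)"
  shows "mutex E (j - i + 1) (take (j - i + 3) (drop (i - 1) as))"
proof -
  let ?bs = "take (j - i + 3) (drop (i - 1) as)"
  have nth: "?bs ! l = as ! (i - 1 + l)" if "l < j - i + 3" for l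
    using that ij by simp
  have bs1: "?bs ! 1 = as ! i" using nth[of 1] ij by simp
  show ?thesis
    unfolding mutex_iff
  proof (intro conjI ballI)
    show "length ?bs = j - i + 1 + 2" using ij by simp
    show "uncovered_itinerary E ?bs" using uncovered_itinerary_take_drop[OF it] .
  next
    fix l assume "l \<in> {1..j - i + 1}"
    then have "?bs ! l = as ! (i - 1 + l)" "i \<le> i - 1 + l" "i - 1 + l \<le> j" using nth ij by auto
    then show "anc E (?bs ! l) (?bs ! 1)" "anc E (?bs ! 1) (?bs ! l)" using scc bs1 by auto
  next
    have "?bs ! 0 = as ! (i - 1)" "?bs ! (j - i + 1 + 1) = as ! Suc j" using nth ij by auto
    then show "\<not> anc E (?bs ! 1) (?bs ! 0)" "\<not> anc E (?bs ! 1) (?bs ! (j - i + 1 + 1))"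
      using ends bs1 by auto
  qed simp
qed

lemma ex_mutex_segment:
  assumes it: "uncovered_itinerary E as" and len: "length as = t + 2" and k: "1 \<le> k" "k \<le> t"
    and closed: "\<And>m. m < t + 2 \<Longrightarrow> anc E (as ! k) (as ! m) \<Longrightarrow> anc E (as ! m) (as ! k)"
    and ends: "\<not> anc E (as ! k) (as ! 0)" "\<not> anc E (as ! k) (as ! (t + 1))"
  shows "\<exists>i j. 1 \<le> i \<and> i \<le> j \<and> j \<le> t \<and> mutex E (j - i + 1) (take (j - i + 3) (drop (i - 1) as))"
proof -
  define P where "P l \<longleftrightarrow> anc E (as ! k) (as ! l) \<and> anc E (as ! l) (as ! k)" for l
  have Pk: "P k" and "\<not> P 0" "\<not> P (t + 1)" "0 < k" "k < t + 1"
    using ends k unfolding P_def by auto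
  obtain i where i: "0 < i" "i \<le> k" "\<forall>l. i \<le> l \<and> l \<le> k \<longrightarrow> P l" "\<not> P (i - 1)"
    using ex_run_start[of P k 0, OF Pk \<open>\<not> P 0\<close> \<open>0 < k\<close>] by blast
  obtain j where j: "k \<le> j" "j < t + 1" "\<forall>l. k \<le> l \<and> l \<le> j \<longrightarrow> P l" "\<not> P (Suc j)"
    using ex_run_end[of P k "t + 1", OF Pk \<open>\<not> P (t + 1)\<close> \<open>k < t + 1\<close>] by blast
  have run: "P l" if "i \<le> l" "l \<le> j" for l using i(3) j(3) that by (cases "l \<le> k") auto
  then have ki: "anc E (as ! k) (as ! i)" "anc E (as ! i) (as ! k)"
    using i(2) j(1) unfolding P_def by auto
  have scc: "anc E (as ! l) (as ! i) \<and> anc E (as ! i) (as ! l)" if "i \<le> l" "l \<le> j" for l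
    using run[OF that] anc_trans[OF _ ki(1), of "as ! l"] anc_trans[OF ki(2), of "as ! l"]
    unfolding P_def by blast
  have leave: "\<not> anc E (as ! i) (as ! m)" if "m < t + 2" "\<not> P m" for m
  proof
    assume "anc E (as ! i) (as ! m)"
    then have "anc E (as ! k) (as ! m)" using anc_trans[OF ki(1)] by blast
    then show False using closed[OF that(1)] that(2) unfolding P_def by blast
  qed
  have "mutex E (j - i + 1) (take (j - i + 3) (drop (i - 1) as))"
  proof (rule mutex_segment[OF it _ _ _ scc])
    show "\<not> anc E (as ! i) (as ! (i - 1))" using leave[of "i - 1"] i(2,4) k by simp
    show "\<not> anc E (as ! i) (as ! Suc j)" using leave[of "Suc j"] j(4) j(2) by simp
  qed (use i j len in auto)
  then show ?thesis using i j by (intro exI[of _ i] exI[of _ j]) auto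
qed

lemma Dt_ex_outside_An:
  assumes E: "E \<subseteq> {1..n} \<times> {1..n}" and x: "x \<in> POPs n" "E1 n E x = {(a, b). padj E a b}"
    and as: "as \<in> Dt n E t x" and t: "1 \<le> t"
  shows "\<exists>k < t + 2. as ! k \<notin>
    An E (below x {blk (fst x) (as ! 0), blk (fst x) (as ! (t + 1))} \<union> {as ! 0, as ! (t + 1)})"
proof (rule ccontr)
  define a b where "a = as ! 0" and "b = as ! (t + 1)"
  define Z where "Z = below x {blk (fst x) a, blk (fst x) b} - {a, b}"
  assume "\<not> ?thesis"
  then have An_as: "as ! k \<in> An E (Z \<union> {a, b})" if "k < t + 2" for k
    using that unfolding Z_def a_def b_def by (metis Un_Diff_cancel2)
  have len: "length as = t + 2" and it: "uncovered_itinerary E as"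
    and blk: "\<forall>i\<in>{1..t}. blk (fst x) (as ! i) = blk (fst x) (as ! 1)"
    and ord: "\<not> ((blk (fst x) (as ! 1), blk (fst x) a) \<in> snd x \<or> (blk (fst x) (as ! 1), blk (fst x) b) \<in> snd x)"
    using Dt_iff[OF E x(2), THEN iffD1, OF as] unfolding a_def b_def by blast+
  have "as \<noteq> []" using len by auto
  then have ends: "hd as = a" "last as = b" using len unfolding a_def b_def by (simp_all add: hd_conv_nth last_conv_nth)
  have ab: "a \<noteq> b" "\<not> padj E b a"
    using it len t unfolding uncovered_itinerary_def a_def b_def by (auto simp: nth_eq_iff_index_eq)
  have "a \<in> set as" "b \<in> set as" using len unfolding a_def b_def by simp_all
  then have "a \<in> {1..n}" "b \<in> {1..n}" using uncovered_itinerary_range[OF E it] len by auto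
  then have "dsep E a b Z" using ab x(2) padj_sym unfolding E1_def Z_def by blast
  moreover have "\<not> dsep E (hd as) (last as) Z"
  proof (rule padj_chain_not_dsep)
    fix i assume "0 < i" "Suc i < length as"
    then have "i \<in> {1..t}" using len by simp
    then have "blk (fst x) (as ! i) = blk (fst x) (as ! 1)" using blk by blast
    then show "as ! i \<notin> Z" using ord mem_below_iff[OF x(1)] unfolding Z_def by auto
  qed (use len it ends An_as ab in \<open>auto simp: uncovered_itinerary_def\<close>)
  ultimately show False using ends by simp
qed

lemma Dt_mutex_segment_whole:
  assumes E: "E \<subseteq> {1..n} \<times> {1..n}" and x: "x \<in> POPs n" "E1 n E x = {(a, b). padj E a b}"
    and as: "as \<in> Dt n E t x"
    and smaller: "\<And>s bs. 1 \<le> s \<Longrightarrow> s < t \<Longrightarrow> mutex E s bs \<Longrightarrow> bs \<in> Dt n E s x"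
    and ij: "1 \<le> i" "i \<le> j" "j \<le> t"
    and seg: "mutex E (j - i + 1) (take (j - i + 3) (drop (i - 1) as))"
  shows "i = 1 \<and> j = t"
proof (rule ccontr)
  assume proper: "\<not> (i = 1 \<and> j = t)"
  let ?bs = "take (j - i + 3) (drop (i - 1) as)" and ?\<beta> = "blk (fst x) (as ! 1)"
  have len: "length as = t + 2" and it: "uncovered_itinerary E as"
    and blk: "\<forall>l\<in>{1..t}. blk (fst x) (as ! l) = ?\<beta>"
    using Dt_iff[OF E x(2), THEN iffD1, OF as] by blast+
  have "?bs \<in> Dt n E (j - i + 1) x" using smaller[OF _ _ seg] proper ij by auto
  then have ord: "\<not> ((blk (fst x) (?bs ! 1), blk (fst x) (?bs ! 0)) \<in> snd x \<or>
      (blk (fst x) (?bs ! 1), blk (fst x) (?bs ! (j - i + 1 + 1))) \<in> snd x)"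
    using Dt_iff[OF E x(2), THEN iffD1] by blast
  have bs: "?bs ! 0 = as ! (i - 1)" "?bs ! 1 = as ! i" "?bs ! (j - i + 1 + 1) = as ! Suc j"
    using ij len by auto
  have "set as \<subseteq> {1..n}" using uncovered_itinerary_range[OF E it] len by simp
  moreover have "as ! 1 \<in> set as" using len by simp
  ultimately have "as ! 1 \<in> {1..n}" by blast
  then have refl: "(?\<beta>, ?\<beta>) \<in> snd x" by (rule blk_order_refl[OF x(1)])
  have "i \<in> {1..t}" using ij by simp
  then have "blk (fst x) (as ! i) = ?\<beta>" using blk by blast
  then have "blk (fst x) (?bs ! 1) = ?\<beta>" using bs(2) by simp
  moreover have "blk (fst x) (?bs ! 0) = ?\<beta> \<or> blk (fst x) (?bs ! (j - i + 1 + 1)) = ?\<beta>"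
  proof (cases "i = 1")
    case True
    then have "Suc j \<in> {1..t}" using proper ij by auto
    then have "blk (fst x) (as ! Suc j) = ?\<beta>" using blk by blast
    then show ?thesis using bs(3) by simp
  next
    case False
    then have "i - 1 \<in> {1..t}" using ij by auto
    then have "blk (fst x) (as ! (i - 1)) = ?\<beta>" using blk by blast
    then show ?thesis using bs(1) by simp
  qed
  ultimately show False using ord refl by auto
qed

lemma Dt_imp_mutex:
  assumes E: "E \<subseteq> {1..n} \<times> {1..n}" and x: "x \<in> POPs n" "E1 n E x = {(a, b). padj E a b}"
    and t: "1 \<le> t"
    and smaller: "\<And>s bs. 1 \<le> s \<Longrightarrow> s < t \<Longrightarrow> mutex E s bs \<Longrightarrow> bs \<in> Dt n E s x"
    and as: "as \<in> Dt n E t x"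
  shows "mutex E t as"
proof -
  have len: "length as = t + 2" and it: "uncovered_itinerary E as"
    using Dt_iff[OF E x(2), THEN iffD1, OF as] by blast+
  define U where
    "U = An E (below x {blk (fst x) (as ! 0), blk (fst x) (as ! (t + 1))} \<union> {as ! 0, as ! (t + 1)})"
  have U_ends: "as ! 0 \<in> U" "as ! (t + 1) \<in> U" unfolding U_def using in_An by auto
  obtain k0 where "k0 < t + 2" "as ! k0 \<notin> U"
    using Dt_ex_outside_An[OF E x as t] unfolding U_def by blast
  then obtain w where w: "w \<in> set as" "w \<notin> U"
    and maximal: "\<And>v. v \<in> set as \<Longrightarrow> v \<notin> U \<Longrightarrow> anc E w v \<Longrightarrow> anc E v w"
    using finite_ex_anc_maximal[OF _ E, of "as ! k0" "{v \<in> set as. v \<notin> U}"] len by auto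
  then obtain k where k: "k < t + 2" "as ! k = w" using len by (auto simp: in_set_conv_nth)
  have outside: "\<not> anc E (as ! k) v" if "v \<in> U" for v
    using that w(2) k(2) An_anc_trans unfolding U_def by blast
  have "k \<noteq> 0" "k \<noteq> t + 1" using U_ends w(2) k(2) by metis+
  then have "1 \<le> k" "k \<le> t" using k(1) by auto
  moreover have "anc E (as ! m) (as ! k)" if "m < t + 2" "anc E (as ! k) (as ! m)" for m
    using maximal[of "as ! m"] outside[of "as ! m"] that len k(2) by auto
  ultimately obtain i j where ij: "1 \<le> i" "i \<le> j" "j \<le> t"
    and seg: "mutex E (j - i + 1) (take (j - i + 3) (drop (i - 1) as))"
    using ex_mutex_segment[OF it len] outside U_ends by blast
  then have "i = 1 \<and> j = t" using Dt_mutex_segment_whole[OF E x as smaller] by blast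
  then show ?thesis using seg len t by simp
qed

lemma finite_Dt: "finite (Dt n E t x)"
proof (rule finite_subset)
  show "Dt n E t x \<subseteq> {xs. set xs \<subseteq> {1..n} \<and> length xs = t + 2}" unfolding Dt_def by auto
qed (rule finite_lists_length_eq, simp)

lemma pop_of_in_S4: "E \<subseteq> {1..n} \<times> {1..n} \<Longrightarrow> pop_of n E \<in> S4 n E"
  using S4_eq S3_eq S2_eq S1_eq pop_of_in_POPs E1_pop_of by simp

lemma S5_eq:
  assumes E: "E \<subseteq> {1..n} \<times> {1..n}"
  shows "S5 n E (Suc k) = {x \<in> S4 n E. \<forall>s\<in>{1..Suc k}. Dt n E s x = Dt n E s (pop_of n E)}"
proof (induction k)
  case 0
  have "S4 n E \<subseteq> S2 n E" using S4_eq[OF E] S3_eq[OF E] by auto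
  then show ?case using Dt_one_S2[OF E] by auto
next
  case (Suc k)
  let ?t = "Suc (Suc k)"
  have "S5 n E ?t = {x \<in> S5 n E (Suc k). Dt n E ?t x = Dt n E ?t (pop_of n E)}"
    unfolding S5.simps
  proof (rule argmax_on_card_eq)
    show "pop_of n E \<in> S5 n E (Suc k)" using Suc.IH pop_of_in_S4[OF E] by simp
  next
    fix x assume "x \<in> S5 n E (Suc k)"
    then have x4: "x \<in> S4 n E" and earlier: "\<forall>s\<in>{1..Suc k}. Dt n E s x = Dt n E s (pop_of n E)"
      using Suc.IH by auto
    have x: "x \<in> POPs n" "E1 n E x = {(a, b). padj E a b}"
      using x4 S4_eq[OF E] S3_eq[OF E] S2_eq[OF E] S1_eq[OF E] by auto
    have "mutex E ?t as" if "as \<in> Dt n E ?t x" for as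
    proof (rule Dt_imp_mutex[OF E x _ _ that])
      fix s bs assume "1 \<le> s" "s < ?t" "mutex E s bs"
      then show "bs \<in> Dt n E s x" using earlier Dt_pop_of_iff_mutex[OF E] by auto
    qed simp
    then show "Dt n E ?t x \<subseteq> Dt n E ?t (pop_of n E)" using Dt_pop_of_iff_mutex[OF E] by auto
  qed (rule finite_Dt)
  moreover have "{1..?t} = insert ?t {1..Suc k}" by auto
  ultimately show ?case unfolding Suc.IH by auto
qed

theorem proposition3p13:
  fixes n :: nat and E :: "(nat \<times> nat) set"
  assumes "n \<ge> 3"
    and "E \<subseteq> {1..n} \<times> {1..n}"
  shows "(\<forall>t \<in> {1..n-2}. pop_of n E \<in> S5 n E t) \<and>
         (\<forall>t \<in> {1..n-2}. \<forall>x \<in> S5 n E t. \<forall>as.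
            as \<in> Dt n E t x \<longleftrightarrow> mutex E t as)"
proof (intro conjI ballI allI)
  \<comment> \<open>The hypothesis n \<ge> 3 only makes the range of t nonempty.\<close>
  fix t assume "t \<in> {1..n-2}"
  then obtain k where "t = Suc k" by (cases t) auto
  then show "pop_of n E \<in> S5 n E t" using S5_eq[OF assms(2)] pop_of_in_S4[OF assms(2)] by simp
next
  fix t x as assume t: "t \<in> {1..n-2}" and x: "x \<in> S5 n E t"
  then obtain k where "t = Suc k" by (cases t) auto
  then have "Dt n E t x = Dt n E t (pop_of n E)" using x t S5_eq[OF assms(2)] by auto
  then show "as \<in> Dt n E t x \<longleftrightarrow> mutex E t as"
    using Dt_pop_of_iff_mutex[OF assms(2)] t by simp
qed

end
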